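(* Let $\lambda\in\mathbb{R}$ and let $f(\zeta,u)$ be a complex function on a connected open set $U\subset\mathbb{C}_\zeta\times\mathbb{R}_u$, jointly smooth and holomorphic in $\zeta$, with $f_{,\zeta\zeta}\neq0$ and $f_{,\zeta\zeta\zeta}\neq0$ on $U$. Put $\phi=(\ln f_{,\zeta\zeta})_{,\zeta}$ and $\psi=(\ln f_{,\zeta\zeta})_{,u}$. Then $$\left(\frac{\psi}{\phi}\right)_{,\zeta}=i\lambda\left[\left(\frac{2}{\phi}\right)_{,\zeta}+1\right]\quad\text{on }U$$ if and only if, near every point of $U$, $$f(\zeta,u)=\mathrm{f}\big(\zeta e^{i\lambda u}-h(u)\big)+A_1(u)\zeta+A_0(u)$$ for some holomorphic function $\mathrm{f}$ of one complex variable with $\mathrm{f}'''\neq0$ and smooth complex functions $h,A_1,A_0$ of $u$.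
   Context: Subscripts after a comma denote partial derivatives; $\zeta$ is a complex variable and $u$ a real variable; primes denote derivatives of $\mathrm{f}$ with respect to its argument. *)

theory Defs
  imports "HOL-Complex_Analysis.Complex_Analysis"
begin

fun iter_dd :: "'a list \<Rightarrow> ('a::real_normed_vector \<Rightarrow> 'b::real_normed_vector) \<Rightarrow> 'a \<Rightarrow> 'b" where
  "iter_dd [] g = g"
| "iter_dd (v # vs) g = (\<lambda>x. vector_derivative (\<lambda>t. iter_dd vs g (x + t *\<^sub>R v)) (at 0))"

text \<open>On open subsets of a finite-dimensional
  space this is the usual notion of smoothness.\<close>
definition smooth_on :: "'a::real_normed_vector set \<Rightarrow> ('a \<Rightarrow> 'b::real_normed_vector) \<Rightarrow> bool" where
  "smooth_on S g \<longleftrightarrow>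
     (\<forall>vs v x. x \<in> S \<longrightarrow>
        ((\<lambda>t. iter_dd vs g (x + t *\<^sub>R v)) has_vector_derivative iter_dd (v # vs) g x) (at 0)) \<and>
     (\<forall>vs. continuous_on S (iter_dd vs g))"

definition pz :: "(complex \<times> real \<Rightarrow> complex) \<Rightarrow> complex \<times> real \<Rightarrow> complex" where
  "pz g p = deriv (\<lambda>z. g (z, snd p)) (fst p)"

definition pu :: "(complex \<times> real \<Rightarrow> complex) \<Rightarrow> complex \<times> real \<Rightarrow> complex" where
  "pu g p = vector_derivative (\<lambda>t. g (fst p, t)) (at (snd p))"

text \<open>\<phi> = (ln f_{,\<zeta>\<zeta>})_{,\<zeta>} = f_{,\<zeta>\<zeta>\<zeta>}/f_{,\<zeta>\<zeta>},
      \<psi> = (ln f_{,\<zeta>\<zeta>})_{,u} = (f_{,\<zeta>\<zeta>})_{,u}/f_{,\<zeta>\<zeta>} (logarithmic derivatives,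
  independent of the branch of the logarithm).\<close>
definition phi :: "(complex \<times> real \<Rightarrow> complex) \<Rightarrow> complex \<times> real \<Rightarrow> complex" where
  "phi f p = pz (pz (pz f)) p / pz (pz f) p"

definition psi :: "(complex \<times> real \<Rightarrow> complex) \<Rightarrow> complex \<times> real \<Rightarrow> complex" where
  "psi f p = pu (pz (pz f)) p / pz (pz f) p"

end

theory Submission
  imports Defs
begin

text \<open>
  Write g = f_{,\<zeta>\<zeta>}. Since \<phi> = g_{,\<zeta>}/g and \<psi> = g_{,u}/g, the equation says exactly that
  (\<psi> - 2i\<lambda>)/\<phi> - i\<lambda>\<zeta> does not depend on \<zeta>; calling it c(u), g solves the linear transport
  equation g_{,u} = 2i\<lambda> g + (c(u) + i\<lambda>\<zeta>) g_{,\<zeta>}. Its characteristics are the curves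
  \<zeta> = (w + h(u)) e^{-i\<lambda>u} with h' = -c e^{i\<lambda>u}, along which g e^{-2i\<lambda>u} is constant. Hence
  g(\<zeta>, u) = G(\<zeta> e^{i\<lambda>u} - h(u)) e^{2i\<lambda>u} near any point, and with F'' = G the difference
  f - F(\<zeta> e^{i\<lambda>u} - h(u)) has vanishing second \<zeta>-derivative, i.e. it is affine in \<zeta>.
  Conversely, for f of this form \<phi> and \<psi> can be computed explicitly. To differentiate \<psi>/\<phi> in \<zeta>
  one needs that g_{,u} is holomorphic in \<zeta>: it is a locally uniform limit of holomorphic
  difference quotients.
\<close>

section \<open>Smooth functions of one real variable\<close>

text \<open>C_on n S g: g can be differentiated n times at every point of S.\<close>

fun C_on :: "nat \<Rightarrow> real set \<Rightarrow> (real \<Rightarrow> complex) \<Rightarrow> bool" where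
  "C_on 0 S g = True"
| "C_on (Suc n) S g = (\<exists>g'. (\<forall>x\<in>S. (g has_vector_derivative g' x) (at x)) \<and> C_on n S g')"

definition C_infinity_on :: "real set \<Rightarrow> (real \<Rightarrow> complex) \<Rightarrow> bool" where
  "C_infinity_on S g \<longleftrightarrow> (\<forall>n. C_on n S g)"

lemma C_on_Suc_imp: "C_on (Suc n) S g \<Longrightarrow> C_on n S g"
proof (induction n arbitrary: g)
  case (Suc n)
  then obtain g' where "\<forall>x\<in>S. (g has_vector_derivative g' x) (at x)" "C_on (Suc n) S g'" by auto
  with Suc.IH show ?case by auto
qed simp

lemma C_on_subset: "C_on n S g \<Longrightarrow> T \<subseteq> S \<Longrightarrow> C_on n T g"
proof (induction n arbitrary: g)
  case (Suc n)
  then obtain g' where "\<forall>x\<in>S. (g has_vector_derivative g' x) (at x)" "C_on n S g'" by auto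
  with Suc show ?case by auto
qed simp

lemma C_on_cong:
  "C_on n S g \<Longrightarrow> open S \<Longrightarrow> (\<And>x. x \<in> S \<Longrightarrow> g x = g2 x) \<Longrightarrow> C_on n S g2"
proof (induction n arbitrary: g g2)
  case (Suc n)
  then obtain g' where d: "\<forall>x\<in>S. (g has_vector_derivative g' x) (at x)" "C_on n S g'" by auto
  have "\<forall>x\<in>S. (g2 has_vector_derivative g' x) (at x)"
    using d(1) Suc.prems by (metis has_vector_derivative_transform_within_open)
  with d(2) show ?case by auto
qed simp

lemma C_on_const: "C_on n S (\<lambda>x. c)"
proof (induction n arbitrary: c)
  case (Suc n) then show ?case by (auto intro!: exI[of _ "\<lambda>x. 0"] derivative_eq_intros)
qed simp

lemma C_on_add: "C_on n S a \<Longrightarrow> C_on n S b \<Longrightarrow> C_on n S (\<lambda>x. a x + b x)"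
proof (induction n arbitrary: a b)
  case (Suc n)
  then obtain a' b' where "\<forall>x\<in>S. (a has_vector_derivative a' x) (at x)" "C_on n S a'"
     "\<forall>x\<in>S. (b has_vector_derivative b' x) (at x)" "C_on n S b'" by auto
  with Suc.IH show ?case
    by (auto intro!: exI[of _ "\<lambda>x. a' x + b' x"] derivative_eq_intros)
qed simp

lemma C_on_mult: "C_on n S a \<Longrightarrow> C_on n S b \<Longrightarrow> C_on n S (\<lambda>x. a x * b x)"
proof (induction n arbitrary: a b)
  case (Suc n)
  then obtain a' b' where d: "\<forall>x\<in>S. (a has_vector_derivative a' x) (at x)" "C_on n S a'"
     "\<forall>x\<in>S. (b has_vector_derivative b' x) (at x)" "C_on n S b'" by auto
  have "C_on n S a" "C_on n S b" using Suc.prems C_on_Suc_imp by blast+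
  then have "C_on n S (\<lambda>x. a x * b' x + a' x * b x)"
    using Suc.IH d C_on_add by blast
  moreover have "\<forall>x\<in>S. ((\<lambda>x. a x * b x) has_vector_derivative (a x * b' x + a' x * b x)) (at x)"
    using d by (auto intro!: has_vector_derivative_mult)
  ultimately show ?case by auto
qed simp

lemma C_on_holomorphic_comp:
  assumes "C_on n S \<gamma>" "open W" "\<And>x. x \<in> S \<Longrightarrow> \<gamma> x \<in> W" "H holomorphic_on W"
  shows "C_on n S (\<lambda>x. H (\<gamma> x))"
  using assms
proof (induction n arbitrary: H)
  case (Suc n)
  then obtain \<gamma>' where d: "\<forall>x\<in>S. (\<gamma> has_vector_derivative \<gamma>' x) (at x)" "C_on n S \<gamma>'" by auto
  have "C_on n S \<gamma>" using Suc.prems C_on_Suc_imp by blast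
  then have "C_on n S (\<lambda>x. deriv H (\<gamma> x))"
    using Suc.IH Suc.prems holomorphic_deriv by blast
  then have "C_on n S (\<lambda>x. \<gamma>' x * deriv H (\<gamma> x))" using C_on_mult d(2) by blast
  moreover have "\<forall>x\<in>S. ((\<lambda>x. H (\<gamma> x)) has_vector_derivative \<gamma>' x * deriv H (\<gamma> x)) (at x)"
  proof
    fix x assume "x \<in> S"
    have "(H has_field_derivative deriv H (\<gamma> x)) (at (\<gamma> x))"
      using Suc.prems \<open>x \<in> S\<close>
      by (meson DERIV_deriv_iff_field_differentiable holomorphic_on_imp_differentiable_at)
    from field_vector_diff_chain_at[OF d(1)[rule_format, OF \<open>x \<in> S\<close>] this]
    show "((\<lambda>x. H (\<gamma> x)) has_vector_derivative \<gamma>' x * deriv H (\<gamma> x)) (at x)"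
      by (simp add: o_def)
  qed
  ultimately show ?case by auto
qed simp

lemma C_on_inverse:
  assumes "C_on n S a" "\<And>x. x \<in> S \<Longrightarrow> a x \<noteq> 0"
  shows "C_on n S (\<lambda>x. inverse (a x))"
proof (rule C_on_holomorphic_comp[OF assms(1), of "-{0}"])
  show "inverse holomorphic_on - {0}" by (auto intro!: holomorphic_intros)
qed (use assms(2) in auto)

lemma C_on_of_real: "C_on n S (\<lambda>x. complex_of_real x)"
proof (cases n)
  case (Suc m)
  have "\<forall>x\<in>S. ((\<lambda>x. complex_of_real x) has_vector_derivative 1) (at x)"
    by (auto intro!: derivative_eq_intros has_vector_derivative_real_field)
  with Suc C_on_const show ?thesis by auto
qed simp

lemma C_infinity_on_add: "C_infinity_on S a \<Longrightarrow> C_infinity_on S b \<Longrightarrow> C_infinity_on S (\<lambda>x. a x + b x)"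
  by (simp add: C_infinity_on_def C_on_add)

lemma C_infinity_on_mult: "C_infinity_on S a \<Longrightarrow> C_infinity_on S b \<Longrightarrow> C_infinity_on S (\<lambda>x. a x * b x)"
  by (simp add: C_infinity_on_def C_on_mult)

lemma C_infinity_on_const: "C_infinity_on S (\<lambda>x. c)"
  by (simp add: C_infinity_on_def C_on_const)

lemma C_infinity_on_diff: "C_infinity_on S a \<Longrightarrow> C_infinity_on S b \<Longrightarrow> C_infinity_on S (\<lambda>x. a x - b x)"
  using C_infinity_on_add[OF _ C_infinity_on_mult[OF C_infinity_on_const[of S "-1"]], of a b] by simp

lemma C_infinity_on_divide:
  "C_infinity_on S a \<Longrightarrow> C_infinity_on S b \<Longrightarrow> (\<And>x. x \<in> S \<Longrightarrow> b x \<noteq> 0) \<Longrightarrow> C_infinity_on S (\<lambda>x. a x / b x)"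
  by (simp add: C_infinity_on_def C_on_mult C_on_inverse divide_inverse)

lemma C_infinity_on_holomorphic_comp:
  "C_infinity_on S \<gamma> \<Longrightarrow> open W \<Longrightarrow> (\<And>x. x \<in> S \<Longrightarrow> \<gamma> x \<in> W) \<Longrightarrow> H holomorphic_on W
   \<Longrightarrow> C_infinity_on S (\<lambda>x. H (\<gamma> x))"
  by (simp add: C_infinity_on_def C_on_holomorphic_comp)

lemma C_infinity_on_cis: "C_infinity_on S (\<lambda>t. exp (\<i> * complex_of_real (lam * t)))"
  using C_infinity_on_holomorphic_comp[of S "\<lambda>t. \<i> * of_real lam * of_real t" UNIV exp]
  by (simp add: C_infinity_on_def C_on_mult C_on_const C_on_of_real holomorphic_on_exp mult.assoc)

lemma C_infinity_on_cong:
  "C_infinity_on S g \<Longrightarrow> open S \<Longrightarrow> (\<And>x. x \<in> S \<Longrightarrow> g x = g2 x) \<Longrightarrow> C_infinity_on S g2"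
  by (meson C_infinity_on_def C_on_cong)

lemma C_infinity_on_subset: "C_infinity_on S g \<Longrightarrow> T \<subseteq> S \<Longrightarrow> C_infinity_on T g"
  unfolding C_infinity_on_def using C_on_subset by blast

lemma C_infinity_on_derivative:
  assumes "C_infinity_on S g" "open S" "\<forall>x\<in>S. (g has_vector_derivative g' x) (at x)"
  shows "C_infinity_on S g'"
  unfolding C_infinity_on_def
proof
  fix n
  obtain g2 where g2: "\<forall>x\<in>S. (g has_vector_derivative g2 x) (at x)" "C_on n S g2"
    using assms(1) unfolding C_infinity_on_def by (metis C_on.simps(2))
  have "\<And>x. x \<in> S \<Longrightarrow> g2 x = g' x"
    using g2(1) assms(3) by (meson vector_derivative_unique_at)
  with g2(2) assms(2) show "C_on n S g'" by (rule C_on_cong)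
qed

lemma C_infinity_on_has_vector_derivative:
  assumes "C_infinity_on S g" "open S"
  shows "\<forall>x\<in>S. (g has_vector_derivative vector_derivative g (at x)) (at x)"
proof -
  obtain g' where "\<forall>x\<in>S. (g has_vector_derivative g' x) (at x)"
    using assms unfolding C_infinity_on_def by (metis C_on.simps(2))
  then show ?thesis using vector_derivative_at by fastforce
qed

lemma C_infinity_on_primitive:
  "C_infinity_on S g' \<Longrightarrow> (\<forall>x\<in>S. (g has_vector_derivative g' x) (at x)) \<Longrightarrow> C_infinity_on S g"
  unfolding C_infinity_on_def using C_on_Suc_imp C_on.simps(2) by blast

lemma C_infinity_on_imp_continuous_on: "C_infinity_on S g \<Longrightarrow> open S \<Longrightarrow> continuous_on S g"
  using C_infinity_on_has_vector_derivative
  by (meson continuous_at_imp_continuous_on has_vector_derivative_continuous)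

lemma C_infinity_on_minus: "C_infinity_on S a \<Longrightarrow> C_infinity_on S (\<lambda>x. - a x)"
  using C_infinity_on_diff[OF C_infinity_on_const[of S 0]] by simp

lemma exists_primitive_interval:
  fixes k :: "real \<Rightarrow> complex"
  assumes "continuous_on {a..b} k"
  obtains h where "\<And>x. x \<in> {a<..<b} \<Longrightarrow> (h has_vector_derivative k x) (at x)"
proof
  fix x assume x: "x \<in> {a<..<b}"
  then have "((\<lambda>u. integral {a..u} k) has_vector_derivative k x) (at x within {a<..<b})"
    by (intro has_vector_derivative_within_subset[OF integral_has_vector_derivative[OF assms]]) auto
  then show "((\<lambda>u. integral {a..u} k) has_vector_derivative k x) (at x)"
    by (simp add: at_within_open[OF x open_greaterThanLessThan])
qed

lemma C_infinity_primitive_ball: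
  assumes "open S" "C_infinity_on S k" "cball u0 \<rho> \<subseteq> S"
  obtains h where "C_infinity_on (ball u0 \<rho>) h"
    "\<And>t. t \<in> ball u0 \<rho> \<Longrightarrow> (h has_vector_derivative k t) (at t)"
proof -
  have "{u0 - \<rho>..u0 + \<rho>} \<subseteq> S" using assms(3) by (simp add: cball_eq_atLeastAtMost)
  then have "continuous_on {u0 - \<rho>..u0 + \<rho>} k"
    using C_infinity_on_imp_continuous_on[OF assms(2,1)] continuous_on_subset by blast
  then obtain h where h: "\<And>t. t \<in> {u0 - \<rho><..<u0 + \<rho>} \<Longrightarrow> (h has_vector_derivative k t) (at t)"
    using exists_primitive_interval by blast
  have "ball u0 \<rho> = {u0 - \<rho><..<u0 + \<rho>}" by (simp add: ball_eq_greaterThanLessThan)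
  with h have dh: "\<And>t. t \<in> ball u0 \<rho> \<Longrightarrow> (h has_vector_derivative k t) (at t)" by simp
  have "C_infinity_on (ball u0 \<rho>) k"
    using C_infinity_on_subset[OF assms(2)] assms(3) by (meson ball_subset_cball order_trans)
  with dh have "C_infinity_on (ball u0 \<rho>) h"
    using C_infinity_on_primitive by blast
  with dh show ?thesis using that by blast
qed

lemma has_vector_derivative_shift:
  fixes k :: "real \<Rightarrow> 'a::real_normed_vector"
  assumes "((\<lambda>t. k (u + t)) has_vector_derivative D) (at 0)"
  shows "(k has_vector_derivative D) (at u)"
proof -
  have "((\<lambda>s. s - u) has_vector_derivative 1) (at u)"
    by (auto intro!: derivative_eq_intros)
  from vector_diff_chain_at[OF this, of "\<lambda>t. k (u + t)"] assms show ?thesis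
    by (simp add: o_def)
qed

fun higher_vderiv :: "nat \<Rightarrow> (real \<Rightarrow> complex) \<Rightarrow> real \<Rightarrow> complex" where
  "higher_vderiv 0 g = g"
| "higher_vderiv (Suc n) g = (\<lambda>x. vector_derivative (higher_vderiv n g) (at x))"

lemma C_infinity_on_higher_vderiv:
  assumes "C_infinity_on S g" "open S"
  shows "C_infinity_on S (higher_vderiv n g) \<and>
    (\<forall>x\<in>S. (higher_vderiv n g has_vector_derivative higher_vderiv (Suc n) g x) (at x))"
proof (induction n)
  case 0
  then show ?case using C_infinity_on_has_vector_derivative[OF assms] assms by simp
next
  case (Suc n)
  then have "C_infinity_on S (higher_vderiv (Suc n) g)"
    using C_infinity_on_derivative[OF _ assms(2)] by (metis higher_vderiv.simps(2))
  then show ?case using C_infinity_on_has_vector_derivative assms(2) by simp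
qed

text \<open>Over the reals the derivative in direction v is v times the ordinary derivative, whence the
  factor prod_list vs.\<close>

lemma iter_dd_real_has_vector_derivative:
  assumes "C_infinity_on S g" "open S" "x \<in> S"
    and iter: "\<And>y. y \<in> S \<Longrightarrow> iter_dd vs g y = of_real (prod_list vs) * higher_vderiv (length vs) g y"
  shows "((\<lambda>t. iter_dd vs g (x + t *\<^sub>R v)) has_vector_derivative
           of_real (prod_list vs) * (of_real v * higher_vderiv (Suc (length vs)) g x)) (at 0)"
proof -
  define T where "T = {t::real. x + t * v \<in> S}"
  have "open T" unfolding T_def
    by (rule open_vimage[OF assms(2), of "\<lambda>t. x + t * v", unfolded vimage_def])
       (auto intro!: continuous_intros)
  have line: "((\<lambda>t. x + t * v) has_vector_derivative v) (at 0)"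
    by (auto intro!: derivative_eq_intros)
  have "(higher_vderiv (length vs) g has_vector_derivative
      higher_vderiv (Suc (length vs)) g x) (at ((\<lambda>t. x + t * v) 0))"
    using C_infinity_on_higher_vderiv[OF assms(1,2)] assms(3) by simp
  from vector_diff_chain_at[OF line this]
  have "((\<lambda>t. higher_vderiv (length vs) g (x + t * v)) has_vector_derivative
      v *\<^sub>R higher_vderiv (Suc (length vs)) g x) (at 0)"
    by (simp add: o_def)
  from has_vector_derivative_mult_right[OF this, of "of_real (prod_list vs)"]
  have "((\<lambda>t. iter_dd vs g (x + t *\<^sub>R v)) has_vector_derivative
      of_real (prod_list vs) * (v *\<^sub>R higher_vderiv (Suc (length vs)) g x)) (at 0)"
    by (rule has_vector_derivative_transform_within_open[OF _ \<open>open T\<close>])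
       (use assms(3) iter in \<open>auto simp: T_def\<close>)
  then show ?thesis by (simp add: scaleR_conv_of_real)
qed

lemma iter_dd_real:
  assumes "C_infinity_on S g" "open S" "y \<in> S"
  shows "iter_dd vs g y = of_real (prod_list vs) * higher_vderiv (length vs) g y"
  using assms(3)
proof (induction vs arbitrary: y)
  case (Cons w vs)
  have "iter_dd (w # vs) g y = vector_derivative (\<lambda>t. iter_dd vs g (y + t *\<^sub>R w)) (at 0)"
    by simp
  also have "\<dots> = of_real (prod_list vs) * (of_real w * higher_vderiv (Suc (length vs)) g y)"
    by (rule vector_derivative_at, rule iter_dd_real_has_vector_derivative[OF assms(1,2) Cons.prems Cons.IH])
  finally show ?case by (simp add: mult.assoc mult.left_commute)
qed simp

lemma C_infinity_on_imp_smooth_on: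
  assumes "C_infinity_on S g" "open S"
  shows "smooth_on S g"
  unfolding smooth_on_def
proof (intro conjI allI impI)
  fix vs v x assume x: "x \<in> S"
  note D = iter_dd_real_has_vector_derivative[OF assms x iter_dd_real[OF assms], of vs v]
  then show "((\<lambda>t. iter_dd vs g (x + t *\<^sub>R v)) has_vector_derivative iter_dd (v # vs) g x) (at 0)"
    using vector_derivative_at[OF D] by simp
next
  fix vs :: "real list"
  have "continuous_on S (higher_vderiv (length vs) g)"
    using C_infinity_on_higher_vderiv[OF assms] C_infinity_on_imp_continuous_on assms(2) by blast
  then have "continuous_on S (\<lambda>y. of_real (prod_list vs) * higher_vderiv (length vs) g y)"
    by (intro continuous_intros)
  then show "continuous_on S (iter_dd vs g)"
    by (rule continuous_on_eq) (simp add: iter_dd_real[OF assms])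
qed

lemma smooth_on_has_vector_derivative:
  assumes "smooth_on S h" "t \<in> S"
  shows "(h has_vector_derivative iter_dd [1] h t) (at t)"
proof (rule has_vector_derivative_shift)
  have "((\<lambda>s. iter_dd [] h (t + s *\<^sub>R 1)) has_vector_derivative iter_dd [1] h t) (at 0)"
    using assms unfolding smooth_on_def by blast
  then show "((\<lambda>s. h (t + s)) has_vector_derivative iter_dd [1] h t) (at 0)" by simp
qed

lemma open_slice_u: "open U \<Longrightarrow> open {u::real. (z::complex, u) \<in> U}"
  by (rule open_vimage[of U "\<lambda>u. (z, u)", unfolded vimage_def]) (auto intro!: continuous_intros)

lemma open_slice_z: "open U \<Longrightarrow> open {z::complex. (z, u::real) \<in> U}"
  by (rule open_vimage[of U "\<lambda>z. (z, u)", unfolded vimage_def]) (auto intro!: continuous_intros)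

lemma smooth_on_slice_u_has_vector_derivative:
  assumes "smooth_on U f" "(z, u) \<in> U"
  shows "((\<lambda>t. iter_dd vs f (z, t)) has_vector_derivative iter_dd ((0, 1) # vs) f (z, u)) (at u)"
proof (rule has_vector_derivative_shift)
  have "((\<lambda>t. iter_dd vs f ((z, u) + t *\<^sub>R (0, 1))) has_vector_derivative
          iter_dd ((0, 1) # vs) f (z, u)) (at 0)"
    using assms unfolding smooth_on_def by blast
  then show "((\<lambda>t. iter_dd vs f (z, u + t)) has_vector_derivative
          iter_dd ((0, 1) # vs) f (z, u)) (at 0)"
    by simp
qed

lemma smooth_on_slice_u:
  assumes "smooth_on U f"
  shows "C_infinity_on {u. (z, u) \<in> U} (\<lambda>t. iter_dd vs f (z, t))"
  unfolding C_infinity_on_def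
proof
  fix n show "C_on n {u. (z, u) \<in> U} (\<lambda>t. iter_dd vs f (z, t))"
  proof (induction n arbitrary: vs)
    case (Suc n)
    then show ?case using smooth_on_slice_u_has_vector_derivative[OF assms]
      by (auto intro!: exI[of _ "\<lambda>t. iter_dd ((0, 1) # vs) f (z, t)"])
  qed simp
qed

lemma pz_has_field_derivative:
  assumes "open U" "(z, u) \<in> U" "(\<lambda>\<xi>. \<Phi> (\<xi>, u)) holomorphic_on {\<xi>. (\<xi>, u) \<in> U}"
  shows "((\<lambda>\<xi>. \<Phi> (\<xi>, u)) has_field_derivative pz \<Phi> (z, u)) (at z)"
  using assms open_slice_z[OF assms(1)] unfolding pz_def
  by (simp add: DERIV_deriv_iff_field_differentiable holomorphic_on_imp_differentiable_at)

lemma pz_holomorphic: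
  assumes "open U" "(\<lambda>\<xi>. \<Phi> (\<xi>, u)) holomorphic_on {\<xi>. (\<xi>, u) \<in> U}"
  shows "(\<lambda>\<xi>. pz \<Phi> (\<xi>, u)) holomorphic_on {\<xi>. (\<xi>, u) \<in> U}"
  unfolding pz_def using holomorphic_deriv[OF assms(2) open_slice_z[OF assms(1)]] by simp

lemma pz_has_directional_derivative:
  assumes "open U" "(z, u) \<in> U" "(\<lambda>\<xi>. \<Phi> (\<xi>, u)) holomorphic_on {\<xi>. (\<xi>, u) \<in> U}"
  shows "((\<lambda>t. \<Phi> ((z, u) + t *\<^sub>R (1, 0))) has_vector_derivative pz \<Phi> (z, u)) (at 0)"
proof -
  have "((\<lambda>t. z + of_real t) has_vector_derivative 1) (at 0)"
    by (auto intro!: derivative_eq_intros has_vector_derivative_real_field)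
  from field_vector_diff_chain_at[OF this, of "\<lambda>\<xi>. \<Phi> (\<xi>, u)"] pz_has_field_derivative[OF assms]
  show ?thesis by (simp add: o_def scaleR_conv_of_real)
qed

lemma vector_derivative_cong_open:
  fixes p :: "'a::real_normed_vector"
  assumes "open U" "p \<in> U" "\<And>q. q \<in> U \<Longrightarrow> A q = B q"
  shows "vector_derivative (\<lambda>t. A (p + t *\<^sub>R v)) (at 0) = vector_derivative (\<lambda>t. B (p + t *\<^sub>R v)) (at 0)"
proof (rule vector_derivative_cong_eq)
  have "open {t::real. p + t *\<^sub>R v \<in> U}"
    by (rule open_vimage[OF assms(1), of "\<lambda>t. p + t *\<^sub>R v", unfolded vimage_def])
       (auto intro!: continuous_intros)
  then have "eventually (\<lambda>t. p + t *\<^sub>R v \<in> U) (nhds 0)"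
    using eventually_nhds_in_open[of _ 0] assms(2) by force
  then show "eventually (\<lambda>t. t \<in> UNIV \<longrightarrow> A (p + t *\<^sub>R v) = B (p + t *\<^sub>R v)) (nhds 0)"
    by (rule eventually_mono) (use assms in auto)
qed auto

lemma pz_funpow_eq_iter_dd:
  assumes "open U" "\<And>u. (\<lambda>\<xi>. f (\<xi>, u)) holomorphic_on {\<xi>. (\<xi>, u) \<in> U}"
  shows "(\<forall>u. (\<lambda>\<xi>. (pz ^^ k) f (\<xi>, u)) holomorphic_on {\<xi>. (\<xi>, u) \<in> U}) \<and>
         (\<forall>p\<in>U. iter_dd (replicate k (1, 0)) f p = (pz ^^ k) f p)"
proof (induction k)
  case 0 then show ?case using assms by simp
next
  case (Suc k)
  have "iter_dd (replicate (Suc k) (1, 0)) f p = (pz ^^ Suc k) f p" if p: "p \<in> U" for p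
  proof -
    obtain z u where p_eq: "p = (z, u)" by fastforce
    have "iter_dd (replicate (Suc k) (1, 0)) f p
       = vector_derivative (\<lambda>t. iter_dd (replicate k (1, 0)) f (p + t *\<^sub>R (1, 0))) (at 0)" by simp
    also have "\<dots> = vector_derivative (\<lambda>t. (pz ^^ k) f (p + t *\<^sub>R (1, 0))) (at 0)"
      by (rule vector_derivative_cong_open[OF assms(1) p]) (use Suc in auto)
    also have "\<dots> = pz ((pz ^^ k) f) p"
      unfolding p_eq
      by (rule vector_derivative_at, rule pz_has_directional_derivative[OF assms(1)]) (use p p_eq Suc in auto)
    finally show ?thesis by simp
  qed
  then show ?case using Suc pz_holomorphic[OF assms(1)] by simp
qed

lemma pz_eqI:
  assumes "open V" "(\<xi>, t) \<in> V" "\<And>\<eta>. (\<eta>, t) \<in> V \<Longrightarrow> \<Phi> (\<eta>, t) = \<Psi> \<eta>"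
    "(\<Psi> has_field_derivative D) (at \<xi>)"
  shows "pz \<Phi> (\<xi>, t) = D"
proof -
  have "((\<lambda>\<eta>. \<Phi> (\<eta>, t)) has_field_derivative D) (at \<xi>)"
    by (rule has_field_derivative_transform_within_open[OF assms(4) open_slice_z[OF assms(1), of t]])
       (use assms(2,3) in auto)
  then show ?thesis unfolding pz_def by (simp add: DERIV_imp_deriv)
qed

lemma pz_eq_deriv:
  assumes "open S" "z \<in> S" "\<And>\<xi>. \<xi> \<in> S \<Longrightarrow> \<Phi> (\<xi>, u) = \<Psi> \<xi>"
  shows "pz \<Phi> (z, u) = deriv \<Psi> z"
  unfolding pz_def fst_conv snd_conv
  by (rule deriv_cong_ev[OF eventually_mono[OF eventually_nhds_in_open[OF assms(1,2)]]])
     (use assms(3) in auto)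

lemma pz_has_field_derivative_cong:
  assumes "open S" "z \<in> S" "\<And>\<xi>. \<xi> \<in> S \<Longrightarrow> \<Phi> (\<xi>, u) = \<Psi> \<xi>" "\<Psi> field_differentiable (at z)"
  shows "((\<lambda>\<xi>. \<Phi> (\<xi>, u)) has_field_derivative pz \<Phi> (z, u)) (at z)"
proof -
  have "(\<Psi> has_field_derivative deriv \<Psi> z) (at z)"
    using assms(4) by (simp add: DERIV_deriv_iff_field_differentiable)
  then have "((\<lambda>\<xi>. \<Phi> (\<xi>, u)) has_field_derivative deriv \<Psi> z) (at z)"
    by (rule has_field_derivative_transform_within_open[OF _ assms(1,2)]) (simp add: assms(3))
  then show ?thesis using pz_eq_deriv[of S z \<Phi> u \<Psi>] assms by simp
qed

section \<open>Joint differentiability\<close>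

lemma cball_times_cball_in_open:
  assumes "open U" "(z::complex, u::real) \<in> U"
  obtains \<rho> where "\<rho> > 0" "cball z \<rho> \<times> cball u \<rho> \<subseteq> U"
proof -
  obtain e where e: "e > 0" "ball (z, u) e \<subseteq> U" using assms open_contains_ball by blast
  have "cball z (e/3) \<times> cball u (e/3) \<subseteq> U"
  proof
    fix q assume "q \<in> cball z (e/3) \<times> cball u (e/3)"
    then obtain a b where q: "q = (a, b)" "dist z a \<le> e/3" "dist u b \<le> e/3" by auto
    have "dist (z, u) (a, b) \<le> dist z a + dist u b"
      unfolding dist_norm using norm_Pair_le[of "z - a" "u - b"] by simp
    with q e show "q \<in> U" by auto
  qed
  with e show ?thesis by (intro that[of "e/3"]) auto
qed

lemma difference_quotient_estimate:
  fixes k :: "real \<Rightarrow> complex"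
  assumes "t \<noteq> 0" "\<And>s. s \<in> closed_segment u (u + t) \<Longrightarrow> (k has_vector_derivative k' s) (at s)"
    and "\<And>s. s \<in> closed_segment u (u + t) \<Longrightarrow> norm (k' s - k' u) \<le> e"
  shows "norm ((k (u + t) - k u) / of_real t - k' u) \<le> e"
proof -
  have "norm (k (u + t) - k u - (u + t - u) *\<^sub>R k' u) \<le> norm (u + t - u) * e"
    by (rule vector_differentiable_bound_linearization[where S = "closed_segment u (u + t)"])
       (use assms in \<open>auto intro: has_vector_derivative_at_within\<close>)
  then have "norm (k (u + t) - k u - of_real t * k' u) \<le> \<bar>t\<bar> * e"
    by (simp add: scaleR_conv_of_real)
  moreover have "k (u + t) - k u - of_real t * k' u = of_real t * ((k (u + t) - k u) / of_real t - k' u)"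
    using assms(1) by (simp add: field_simps)
  ultimately show ?thesis
    using assms(1) by (simp add: norm_mult mult_le_cancel_left_pos)
qed

lemma uniform_limit_difference_quotient:
  fixes z :: complex and u :: real and G :: "complex \<times> real \<Rightarrow> complex"
  assumes "\<rho> > 0" and box: "cball z \<rho> \<times> cball u \<rho> \<subseteq> U" and cGu: "continuous_on U Gu"
    and dG: "\<And>\<xi> t. (\<xi>, t) \<in> U \<Longrightarrow> ((\<lambda>s. G (\<xi>, s)) has_vector_derivative Gu (\<xi>, t)) (at t)"
  shows "uniform_limit (cball z \<rho>) (\<lambda>t \<xi>. (G (\<xi>, u + t) - G (\<xi>, u)) / of_real t) (\<lambda>\<xi>. Gu (\<xi>, u)) (at 0)"
  unfolding uniform_limit_iff
proof (intro allI impI)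
  fix e :: real assume e: "e > 0"
  define K where "K = cball z \<rho> \<times> cball u \<rho>"
  have "compact K" unfolding K_def by (simp add: compact_Times)
  then have "uniformly_continuous_on K Gu"
    using compact_uniformly_continuous continuous_on_subset[OF cGu] box K_def by blast
  then obtain d where d: "d > 0"
      "\<And>x x'. x \<in> K \<Longrightarrow> x' \<in> K \<Longrightarrow> dist x' x < d \<Longrightarrow> dist (Gu x') (Gu x) < e/2"
    using e unfolding uniformly_continuous_on_def by (meson half_gt_zero)
  have "eventually (\<lambda>t. t \<in> ball 0 (min \<rho> d)) (at (0::real))"
    using assms(1) d(1) by (intro eventually_at_in_open') auto
  moreover have "eventually (\<lambda>t. t \<noteq> 0) (at (0::real))"
    by (simp add: eventually_at_filter)
  ultimately show "eventually (\<lambda>t. \<forall>\<xi>\<in>cball z \<rho>.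
      dist ((G (\<xi>, u + t) - G (\<xi>, u)) / of_real t) (Gu (\<xi>, u)) < e) (at 0)"
  proof eventually_elim
    case (elim t)
    then have t: "\<bar>t\<bar> < \<rho>" "\<bar>t\<bar> < d" "t \<noteq> 0" by auto
    show ?case
    proof
      fix \<xi> assume \<xi>: "\<xi> \<in> cball z \<rho>"
      have near: "\<bar>s - u\<bar> \<le> \<bar>t\<bar>" if "s \<in> closed_segment u (u + t)" for s
        using segment_bound[OF that] by (simp add: dist_real_def)
      have inK: "(\<xi>, s) \<in> K" if "s \<in> closed_segment u (u + t)" for s
        using near[OF that] t \<xi> unfolding K_def by (force simp: dist_real_def)
      have "norm ((G (\<xi>, u + t) - G (\<xi>, u)) / of_real t - Gu (\<xi>, u)) \<le> e/2"
      proof (rule difference_quotient_estimate[where k = "\<lambda>s. G (\<xi>, s)", OF t(3)])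
        fix s assume s: "s \<in> closed_segment u (u + t)"
        have "(\<xi>, s) \<in> U" using inK[OF s] box K_def by auto
        then show "((\<lambda>s. G (\<xi>, s)) has_vector_derivative Gu (\<xi>, s)) (at s)" by (rule dG)
        have "dist (\<xi>, s) (\<xi>, u) < d"
          using near[OF s] t by (simp add: dist_Pair_Pair dist_real_def)
        from d(2)[OF inK[of u] inK[OF s] this] show "norm (Gu (\<xi>, s) - Gu (\<xi>, u)) \<le> e/2"
          by (simp add: dist_norm)
      qed
      with e show "dist ((G (\<xi>, u + t) - G (\<xi>, u)) / of_real t) (Gu (\<xi>, u)) < e"
        by (simp add: dist_norm)
    qed
  qed
qed

text \<open>The difference quotients in u are holomorphic in \<zeta> and converge locally uniformly.\<close>

lemma partial_u_field_differentiable: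
  fixes G :: "complex \<times> real \<Rightarrow> complex"
  assumes "open U" "continuous_on U Gu"
    and dG: "\<And>\<xi> t. (\<xi>, t) \<in> U \<Longrightarrow> ((\<lambda>s. G (\<xi>, s)) has_vector_derivative Gu (\<xi>, t)) (at t)"
    and hG: "\<And>t. (\<lambda>\<xi>. G (\<xi>, t)) holomorphic_on {\<xi>. (\<xi>, t) \<in> U}"
    and "(z, u) \<in> U"
  shows "(\<lambda>\<xi>. Gu (\<xi>, u)) field_differentiable (at z)"
proof -
  obtain \<rho> where \<rho>: "\<rho> > 0" "cball z \<rho> \<times> cball u \<rho> \<subseteq> U"
    using cball_times_cball_in_open assms(1,5) by blast
  define Q where "Q = (\<lambda>t \<xi>. (G (\<xi>, u + t) - G (\<xi>, u)) / of_real t)"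
  have "Q t holomorphic_on cball z \<rho>" if "\<bar>t\<bar> < \<rho>" "t \<noteq> 0" for t
  proof -
    have "cball z \<rho> \<subseteq> {\<xi>. (\<xi>, u + t) \<in> U}" "cball z \<rho> \<subseteq> {\<xi>. (\<xi>, u) \<in> U}"
      using \<rho> that by (auto simp: dist_real_def)
    then show ?thesis unfolding Q_def
      by (intro holomorphic_intros holomorphic_on_subset[OF hG]) (use that in auto)
  qed
  then have Q: "continuous_on (cball z \<rho>) (Q t) \<and> Q t holomorphic_on ball z \<rho>"
    if "\<bar>t\<bar> < \<rho>" "t \<noteq> 0" for t
    using that holomorphic_on_imp_continuous_on holomorphic_on_subset[OF _ ball_subset_cball] by blast
  have "eventually (\<lambda>t. t \<in> ball 0 \<rho>) (at (0::real))"
    using \<rho>(1) by (intro eventually_at_in_open') auto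
  moreover have "eventually (\<lambda>t. t \<noteq> 0) (at (0::real))"
    by (simp add: eventually_at_filter)
  ultimately have "eventually (\<lambda>t. continuous_on (cball z \<rho>) (Q t) \<and> Q t holomorphic_on ball z \<rho>) (at 0)"
    by eventually_elim (use Q in auto)
  from holomorphic_uniform_limit[OF this uniform_limit_difference_quotient[OF \<rho> assms(2) dG, folded Q_def]]
  have "(\<lambda>\<xi>. Gu (\<xi>, u)) holomorphic_on ball z \<rho>" by auto
  with \<rho>(1) show ?thesis using holomorphic_on_imp_differentiable_at by auto
qed

lemma field_differentiable_linearization_bound:
  fixes g :: "complex \<Rightarrow> complex"
  assumes "\<And>w. w \<in> ball z d \<Longrightarrow> (g has_field_derivative g' w) (at w)"
    and "\<And>w. w \<in> ball z d \<Longrightarrow> norm (g' w - c) \<le> B" and "\<xi> \<in> ball z d"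
  shows "norm (g \<xi> - g z - c * (\<xi> - z)) \<le> B * norm (\<xi> - z)"
proof -
  have "norm ((g \<xi> - c * \<xi>) - (g z - c * z)) \<le> B * norm (\<xi> - z)"
  proof (rule field_differentiable_bound[where S = "ball z d"])
    fix w assume "w \<in> ball z d"
    from DERIV_diff[OF assms(1)[OF this] DERIV_cmult[OF DERIV_ident, of c]]
    show "((\<lambda>w. g w - c * w) has_field_derivative g' w - c) (at w within ball z d)"
      by (simp add: has_field_derivative_at_within)
  qed (use assms(2,3) in \<open>auto intro: le_less_trans[OF zero_le_dist]\<close>)
  then show ?thesis by (simp add: algebra_simps)
qed

text \<open>Only the \<zeta>-derivative has to be jointly continuous.\<close>

lemma has_derivative_from_partials:
  fixes G :: "complex \<times> real \<Rightarrow> complex"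
  assumes "open U"
    and dz: "\<And>\<xi> t. (\<xi>, t) \<in> U \<Longrightarrow> ((\<lambda>\<xi>. G (\<xi>, t)) has_field_derivative Gz (\<xi>, t)) (at \<xi>)"
    and cGz: "continuous_on U Gz"
    and du: "((\<lambda>s. G (z, s)) has_vector_derivative Gu) (at u)"
    and "(z, u) \<in> U"
  shows "(G has_derivative (\<lambda>x. Gz (z, u) * fst x + snd x *\<^sub>R Gu)) (at (z, u))"
  unfolding has_derivative_at_alt
proof (intro conjI allI impI)
  show "bounded_linear (\<lambda>x. Gz (z, u) * fst x + snd x *\<^sub>R Gu)"
    by (intro bounded_linear_intros)
  fix e :: real assume e: "e > 0"
  obtain d0 where d0: "d0 > 0" "ball (z, u) d0 \<subseteq> U"
    using assms(1,5) open_contains_ball by blast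
  obtain d1 where d1: "d1 > 0" "\<And>y. y \<in> U \<Longrightarrow> dist y (z, u) < d1 \<Longrightarrow> dist (Gz y) (Gz (z, u)) < e/2"
    using cGz assms(1,5) e unfolding continuous_on_iff by (meson half_gt_zero)
  obtain d2 where d2: "d2 > 0" "\<And>s. norm (s - u) < d2 \<Longrightarrow>
      norm (G (z, s) - G (z, u) - (s - u) *\<^sub>R Gu) \<le> e/2 * norm (s - u)"
    using du e unfolding has_vector_derivative_def has_derivative_at_alt by (meson half_gt_zero)
  define d where "d = min d0 (min d1 d2) / 2"
  have d: "d > 0" "2 * d \<le> d0" "2 * d \<le> d1" "d \<le> d2" using d0 d1 d2 by (auto simp: d_def)
  show "\<exists>d>0. \<forall>y. norm (y - (z, u)) < d \<longrightarrow>
     norm (G y - G (z, u) - (Gz (z, u) * fst (y - (z, u)) + snd (y - (z, u)) *\<^sub>R Gu)) \<le> e * norm (y - (z, u))"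
  proof (intro exI[of _ d] conjI allI impI)
    fix y assume y: "norm (y - (z, u)) < d"
    obtain \<xi> s where ys: "y = (\<xi>, s)" by fastforce
    have n: "norm (\<xi> - z) \<le> norm (y - (z, u))" "norm (s - u) \<le> norm (y - (z, u))"
      using norm_fst_le[of "\<xi> - z" "s - u"] norm_snd_le[of "s - u" "\<xi> - z"] by (auto simp: ys)
    have A: "norm (G (\<xi>, s) - G (z, s) - Gz (z, u) * (\<xi> - z)) \<le> e/2 * norm (\<xi> - z)"
    proof (rule field_differentiable_linearization_bound[where d = d])
      show "\<xi> \<in> ball z d" using n y by (simp add: dist_norm norm_minus_commute)
      fix w assume w: "w \<in> ball z d"
      have "dist (w, s) (z, u) \<le> dist w z + dist s u"
        unfolding dist_norm using norm_Pair_le[of "w - z" "s - u"] by simp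
      also have "\<dots> < 2 * d"
        using w n y by (simp add: dist_norm norm_minus_commute)
      finally have near: "dist (w, s) (z, u) < 2 * d" .
      then have wU: "(w, s) \<in> U" using d0 d by (auto simp: dist_commute)
      show "((\<lambda>w. G (w, s)) has_field_derivative Gz (w, s)) (at w)" by (rule dz[OF wU])
      show "norm (Gz (w, s) - Gz (z, u)) \<le> e/2"
        using d1(2)[OF wU] near d by (simp add: dist_norm)
    qed
    have B: "norm (G (z, s) - G (z, u) - (s - u) *\<^sub>R Gu) \<le> e/2 * norm (s - u)"
      using d2(2) n y d by simp
    have "G y - G (z, u) - (Gz (z, u) * fst (y - (z, u)) + snd (y - (z, u)) *\<^sub>R Gu)
       = (G (\<xi>, s) - G (z, s) - Gz (z, u) * (\<xi> - z)) + (G (z, s) - G (z, u) - (s - u) *\<^sub>R Gu)"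
      by (simp add: ys algebra_simps)
    also have "norm \<dots> \<le> e/2 * norm (\<xi> - z) + e/2 * norm (s - u)"
      by (rule order_trans[OF norm_triangle_ineq add_mono[OF A B]])
    also have "\<dots> \<le> e/2 * norm (y - (z, u)) + e/2 * norm (y - (z, u))"
      using n e by (intro add_mono mult_left_mono) auto
    finally show "norm (G y - G (z, u) - (Gz (z, u) * fst (y - (z, u)) + snd (y - (z, u)) *\<^sub>R Gu))
        \<le> e * norm (y - (z, u))" by simp
  qed (rule d(1))
qed

lemma has_vector_derivative_along_curve:
  fixes G :: "complex \<times> real \<Rightarrow> complex"
  assumes "open U"
    and "\<And>\<xi> t. (\<xi>, t) \<in> U \<Longrightarrow> ((\<lambda>\<xi>. G (\<xi>, t)) has_field_derivative Gz (\<xi>, t)) (at \<xi>)"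
    and "continuous_on U Gz"
    and "((\<lambda>s. G (\<zeta> u, s)) has_vector_derivative Gu) (at u)"
    and "(\<zeta> has_vector_derivative \<zeta>') (at u)"
    and "(\<zeta> u, u) \<in> U"
  shows "((\<lambda>s. G (\<zeta> s, s)) has_vector_derivative (Gz (\<zeta> u, u) * \<zeta>' + Gu)) (at u)"
proof -
  have "((\<lambda>s. (\<zeta> s, s)) has_derivative (\<lambda>h. h *\<^sub>R (\<zeta>', 1))) (at u)"
    using has_vector_derivative_Pair[OF assms(5) has_vector_derivative_id[of "at u"]]
    by (simp add: has_vector_derivative_def)
  from diff_chain_at[OF this has_derivative_from_partials[OF assms(1-4,6)]]
  have "((\<lambda>s. G (\<zeta> s, s)) has_derivative (\<lambda>h. h *\<^sub>R (Gz (\<zeta> u, u) * \<zeta>' + Gu))) (at u)"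
    by (simp add: o_def scaleR_conv_of_real algebra_simps)
  then show ?thesis by (simp add: has_vector_derivative_def)
qed

lemma has_field_derivative_comp_affine:
  assumes "H holomorphic_on W" "open W" "\<xi> * E - c \<in> W"
  shows "((\<lambda>\<xi>. H (\<xi> * E - c)) has_field_derivative deriv H (\<xi> * E - c) * E) (at \<xi>)"
proof (rule DERIV_chain2[of H])
  show "(H has_field_derivative deriv H (\<xi> * E - c)) (at (\<xi> * E - c))"
    using assms by (simp add: DERIV_deriv_iff_field_differentiable holomorphic_on_imp_differentiable_at)
qed (auto intro!: derivative_eq_intros)

lemma affine_if_second_derivative_zero:
  fixes K :: "complex \<Rightarrow> complex"
  assumes "convex S" "\<And>x. x \<in> S \<Longrightarrow> (K has_field_derivative K1 x) (at x)"
    "\<And>x. x \<in> S \<Longrightarrow> (K1 has_field_derivative 0) (at x)" "a \<in> S" "x \<in> S"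
  shows "K x = K a + K1 a * (x - a)"
proof -
  obtain c where c: "\<And>y. y \<in> S \<Longrightarrow> K1 y = c"
    using has_field_derivative_zero_constant[OF assms(1), of K1] assms(3) has_field_derivative_at_within
    by blast
  have "((\<lambda>y. K y - c * y) has_field_derivative 0) (at y within S)" if "y \<in> S" for y
  proof -
    have "((\<lambda>y. K y - c * y) has_field_derivative K1 y - c * 1) (at y)"
      by (intro DERIV_diff DERIV_cmult DERIV_ident assms(2) that)
    then show ?thesis using c[OF that] by (simp add: has_field_derivative_at_within)
  qed
  then obtain d where d: "\<And>y. y \<in> S \<Longrightarrow> K y - c * y = d"
    using has_field_derivative_zero_constant[OF assms(1), of "\<lambda>y. K y - c * y"] by blast
  have "K x = d + c * x" "K a = d + c * a"
    using d[OF assms(5)] d[OF assms(4)] by (simp_all add: algebra_simps)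
  then show ?thesis using c[OF assms(4)] by (simp add: algebra_simps)
qed

lemma holomorphic_second_primitive:
  assumes "convex S" "open S" "G holomorphic_on S"
  obtains F F1 where "\<And>x. x \<in> S \<Longrightarrow> (F has_field_derivative F1 x) (at x)"
    and "\<And>x. x \<in> S \<Longrightarrow> (F1 has_field_derivative G x) (at x)"
proof -
  obtain F1 where "\<And>x. x \<in> S \<Longrightarrow> (F1 has_field_derivative G x) (at x within S)"
    using holomorphic_convex_primitive'[OF assms] by blast
  then have F1: "\<And>x. x \<in> S \<Longrightarrow> (F1 has_field_derivative G x) (at x)"
    using at_within_open[OF _ assms(2)] by metis
  then have "F1 holomorphic_on S"
    using holomorphic_on_open[OF assms(2)] by blast
  then obtain F where "\<And>x. x \<in> S \<Longrightarrow> (F has_field_derivative F1 x) (at x within S)"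
    using holomorphic_convex_primitive'[OF assms(1,2)] by blast
  then have "\<And>x. x \<in> S \<Longrightarrow> (F has_field_derivative F1 x) (at x)"
    using at_within_open[OF _ assms(2)] by metis
  with F1 show ?thesis using that by blast
qed

lemma convex_affine_vimage:
  fixes W :: "complex set"
  assumes "convex W"
  shows "convex {\<xi>. \<xi> * E - b \<in> W}"
  unfolding convex_alt
proof (intro ballI allI impI)
  fix x y and u :: real
  assume "x \<in> {\<xi>. \<xi> * E - b \<in> W}" "y \<in> {\<xi>. \<xi> * E - b \<in> W}" "0 \<le> u \<and> u \<le> 1"
  then have "(1 - u) *\<^sub>R (x * E - b) + u *\<^sub>R (y * E - b) \<in> W"
    using assms unfolding convex_alt by blast
  moreover have "(1 - u) *\<^sub>R (x * E - b) + u *\<^sub>R (y * E - b) = ((1 - u) *\<^sub>R x + u *\<^sub>R y) * E - b"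
    by (simp add: scaleR_conv_of_real algebra_simps)
  ultimately show "(1 - u) *\<^sub>R x + u *\<^sub>R y \<in> {\<xi>. \<xi> * E - b \<in> W}" by simp
qed

section \<open>Characteristics\<close>

abbreviation rot :: "real \<Rightarrow> real \<Rightarrow> complex" where
  "rot lam t \<equiv> exp (\<i> * complex_of_real (lam * t))"

lemma rot_has_vector_derivative:
  "(rot lam has_vector_derivative \<i> * of_real lam * rot lam t) (at t)"
proof -
  have "((\<lambda>w. exp (\<i> * of_real lam * w)) has_field_derivative
      \<i> * of_real lam * exp (\<i> * of_real lam * of_real t)) (at (of_real t))"
    by (auto intro!: derivative_eq_intros)
  from has_vector_derivative_real_field[OF this] show ?thesis by (simp add: mult.assoc)
qed

lemma rot_mult_rot_uminus: "rot lam t * rot (- lam) t = 1"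
  by (simp add: exp_minus)

lemma norm_rot: "norm (rot lam t) = 1"
  by (metis norm_exp_i_times)

lemma rot_inverse_shift:
  "(z * rot lam t - h t + h t) * rot (- lam) t = z"
  using rot_mult_rot_uminus[of lam t] by (simp add: algebra_simps)

lemma characteristic_box:
  fixes h :: "real \<Rightarrow> complex"
  assumes "\<rho> > 0" "continuous_on (ball u0 \<rho>) h"
  obtains \<delta> where "0 < \<delta>" "\<delta> \<le> \<rho>"
    "\<And>t. t \<in> ball u0 \<delta> \<Longrightarrow> z0 * rot lam t - h t \<in> ball (z0 * rot lam u0 - h u0) (\<rho>/2)"
    "\<And>w t. w \<in> ball (z0 * rot lam u0 - h u0) (\<rho>/2) \<Longrightarrow> t \<in> ball u0 \<delta> \<Longrightarrow> (w + h t) * rot (- lam) t \<in> ball z0 \<rho>"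
proof -
  define w0 where "w0 = z0 * rot lam u0 - h u0"
  have "isCont (\<lambda>t. z0 * rot lam t - h t) u0"
    using assms continuous_on_eq_continuous_at[of "ball u0 \<rho>" h]
    by (intro continuous_intros) auto
  then obtain d where d: "d > 0" "\<And>t. dist t u0 < d \<Longrightarrow> dist (z0 * rot lam t - h t) w0 < \<rho>/2"
    unfolding continuous_at_eps_delta w0_def using assms(1) half_gt_zero by blast
  have near: "z0 * rot lam t - h t \<in> ball w0 (\<rho>/2)" if "t \<in> ball u0 (min d \<rho>)" for t
    using d(2)[of t] that by (simp add: dist_commute)
  have "(w + h t) * rot (- lam) t \<in> ball z0 \<rho>" if "w \<in> ball w0 (\<rho>/2)" "t \<in> ball u0 (min d \<rho>)" for w t
  proof -
    have "(w + h t) * rot (- lam) t - z0 = (w - (z0 * rot lam t - h t)) * rot (- lam) t"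
      using rot_mult_rot_uminus[of lam t] by (simp add: algebra_simps)
    then have "dist z0 ((w + h t) * rot (- lam) t) = norm ((w - (z0 * rot lam t - h t)) * rot (- lam) t)"
      by (metis dist_norm dist_commute)
    also have "\<dots> = dist w (z0 * rot lam t - h t)"
      by (simp only: norm_mult norm_rot dist_norm mult_1_right)
    also have "\<dots> \<le> dist w w0 + dist w0 (z0 * rot lam t - h t)" by (rule dist_triangle)
    also have "\<dots> < \<rho>/2 + \<rho>/2"
      using that near[OF that(2)] by (intro add_strict_mono) (auto simp: dist_commute)
    finally show ?thesis by simp
  qed
  with near d(1) assms(1) show ?thesis
    by (intro that[of "min d \<rho>"]) (auto simp: w0_def)
qed

lemma open_characteristic_domain:
  assumes "open J" "open W" "continuous_on J h"
  shows "open {(z, t). t \<in> J \<and> z * rot lam t - h t \<in> W}"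
proof -
  have "continuous_on (UNIV \<times> J) (\<lambda>q. h (snd q))"
    by (rule continuous_on_compose2[OF assms(3) continuous_on_snd]) auto
  then have "continuous_on (UNIV \<times> J) (\<lambda>q. fst q * rot lam (snd q) - h (snd q))"
    by (intro continuous_intros)
  from continuous_open_preimage[OF this _ assms(2)] assms(1)
  have "open ((UNIV \<times> J) \<inter> (\<lambda>q. fst q * rot lam (snd q) - h (snd q)) -` W)"
    by (simp add: open_Times)
  moreover have "(UNIV \<times> J) \<inter> (\<lambda>q. fst q * rot lam (snd q) - h (snd q)) -` W
      = {(z, t). t \<in> J \<and> z * rot lam t - h t \<in> W}"
    by auto
  ultimately show ?thesis by simp
qed

lemma snd_image_characteristic_domain:
  assumes "\<And>t. t \<in> J \<Longrightarrow> z0 * rot lam t - h t \<in> W"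
  shows "snd ` {(z, t). t \<in> J \<and> z * rot lam t - h t \<in> W} = J"
proof
  show "J \<subseteq> snd ` {(z, t). t \<in> J \<and> z * rot lam t - h t \<in> W}"
  proof
    fix t assume "t \<in> J"
    then have "(z0, t) \<in> {(z, t). t \<in> J \<and> z * rot lam t - h t \<in> W}" using assms by simp
    then show "t \<in> snd ` {(z, t). t \<in> J \<and> z * rot lam t - h t \<in> W}" by force
  qed
qed auto

lemma characteristic_curve_has_vector_derivative:
  assumes "(h has_vector_derivative - c * rot lam s) (at s)"
  shows "((\<lambda>s. (w + h s) * rot (- lam) s) has_vector_derivative
    - \<i> * of_real lam * ((w + h s) * rot (- lam) s) - c) (at s)"
proof -
  have "((\<lambda>s. w + h s) has_vector_derivative - c * rot lam s) (at s)"
    using has_vector_derivative_add[OF has_vector_derivative_const assms] by simp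
  then have "((\<lambda>s. (w + h s) * rot (- lam) s) has_vector_derivative
      (w + h s) * (\<i> * of_real (- lam) * rot (- lam) s) + - c * rot lam s * rot (- lam) s) (at s)"
    by (intro has_vector_derivative_mult rot_has_vector_derivative)
  then show ?thesis
    by (rule has_vector_derivative_eq_rhs)
       (simp add: algebra_simps rot_mult_rot_uminus[of lam s, simplified])
qed

section \<open>The normal form solves the equation\<close>

lemma pz_funpow_normal_form:
  assumes "open V" "open W" "F holomorphic_on W"
    and rep: "\<forall>(z, u)\<in>V. z * rot lam u - h u \<in> W \<and> f (z, u) = F (z * rot lam u - h u) + A1 u * z + A0 u"
    and "(\<xi>, t) \<in> V"
  shows "(pz ^^ Suc (Suc k)) f (\<xi>, t) = (deriv ^^ Suc (Suc k)) F (\<xi> * rot lam t - h t) * rot lam t ^ Suc (Suc k)"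
proof -
  have hol: "(deriv ^^ n) F holomorphic_on W" for n
    using holomorphic_higher_deriv[OF assms(3,2)] .
  have comp: "((\<lambda>\<eta>. (deriv ^^ n) F (\<eta> * rot lam t - h t)) has_field_derivative
      (deriv ^^ Suc n) F (\<xi> * rot lam t - h t) * rot lam t) (at \<xi>)" if "(\<xi>, t) \<in> V" for n \<xi>
    using has_field_derivative_comp_affine[OF hol assms(2)] rep that by auto
  have step: "(pz ^^ Suc m) f = pz ((pz ^^ m) f)" for m by simp
  show ?thesis
    using assms(5)
  proof (induction k arbitrary: \<xi>)
    case 0
    have pz1: "pz f (\<eta>, t) = deriv F (\<eta> * rot lam t - h t) * rot lam t + A1 t" if "(\<eta>, t) \<in> V" for \<eta>
    proof (rule pz_eqI[OF assms(1) that])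
      show "((\<lambda>\<eta>. F (\<eta> * rot lam t - h t) + A1 t * \<eta> + A0 t) has_field_derivative
          deriv F (\<eta> * rot lam t - h t) * rot lam t + A1 t) (at \<eta>)"
        using comp[OF that, of 0] by (auto intro!: derivative_eq_intros)
    qed (use rep in auto)
    have "pz (pz f) (\<xi>, t) = (deriv ^^ 2) F (\<xi> * rot lam t - h t) * rot lam t ^ 2"
      by (rule pz_eqI[OF assms(1) 0, of _ "\<lambda>\<eta>. deriv F (\<eta> * rot lam t - h t) * rot lam t + A1 t", OF pz1])
         (use comp[OF 0, of 1] in \<open>auto intro!: derivative_eq_intros simp: power2_eq_square numeral_2_eq_2\<close>)
    then show ?case by (simp add: numeral_2_eq_2)
  next
    case (Suc k)
    show ?case
      unfolding step[of "Suc (Suc k)"]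
      by (rule pz_eqI[OF assms(1) Suc.prems, of _ "\<lambda>\<eta>. (deriv ^^ Suc (Suc k)) F (\<eta> * rot lam t - h t) * rot lam t ^ Suc (Suc k)", OF Suc.IH])
         (use comp[OF Suc.prems, of "Suc (Suc k)"] in \<open>auto intro!: derivative_eq_intros\<close>)
  qed
qed

lemma pu_pz_pz_normal_form:
  assumes "open V" "open W" "F holomorphic_on W"
    and rep: "\<forall>(z, u)\<in>V. z * rot lam u - h u \<in> W \<and> f (z, u) = F (z * rot lam u - h u) + A1 u * z + A0 u"
    and "(\<xi>, u) \<in> V" and dh: "(h has_vector_derivative h') (at u)"
  shows "pu (pz (pz f)) (\<xi>, u) =
    (deriv ^^ 3) F (\<xi> * rot lam u - h u) * (\<xi> * (\<i> * of_real lam * rot lam u) - h') * rot lam u ^ 2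
    + (deriv ^^ 2) F (\<xi> * rot lam u - h u) * (2 * \<i> * of_real lam * rot lam u ^ 2)"
proof -
  define \<gamma> where "\<gamma> = (\<lambda>s. \<xi> * rot lam s - h s)"
  have d\<gamma>: "(\<gamma> has_vector_derivative \<xi> * (\<i> * of_real lam * rot lam u) - h') (at u)"
    unfolding \<gamma>_def by (intro derivative_intros rot_has_vector_derivative dh)
  have "((deriv ^^ 2) F has_field_derivative (deriv ^^ 3) F (\<gamma> u)) (at (\<gamma> u))"
    using holomorphic_higher_deriv[OF assms(3,2), of 2] assms(2) rep assms(5)
    by (auto simp: \<gamma>_def DERIV_deriv_iff_field_differentiable holomorphic_on_imp_differentiable_at
        eval_nat_numeral)
  from field_vector_diff_chain_at[OF d\<gamma> this]
  have "((\<lambda>s. (deriv ^^ 2) F (\<gamma> s)) has_vector_derivative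
      (\<xi> * (\<i> * of_real lam * rot lam u) - h') * (deriv ^^ 3) F (\<gamma> u)) (at u)"
    by (simp add: o_def)
  moreover have "((\<lambda>s. rot lam s ^ 2) has_vector_derivative 2 * \<i> * of_real lam * rot lam u ^ 2) (at u)"
    using has_vector_derivative_mult[OF rot_has_vector_derivative[of lam u] rot_has_vector_derivative[of lam u]]
    unfolding power2_eq_square by (simp add: algebra_simps)
  ultimately have "((\<lambda>s. (deriv ^^ 2) F (\<gamma> s) * rot lam s ^ 2) has_vector_derivative
      (deriv ^^ 2) F (\<gamma> u) * (2 * \<i> * of_real lam * rot lam u ^ 2)
      + (\<xi> * (\<i> * of_real lam * rot lam u) - h') * (deriv ^^ 3) F (\<gamma> u) * rot lam u ^ 2) (at u)"
    by (rule has_vector_derivative_mult)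
  then have "((\<lambda>s. (deriv ^^ 2) F (\<gamma> s) * rot lam s ^ 2) has_vector_derivative
      (deriv ^^ 3) F (\<gamma> u) * (\<xi> * (\<i> * of_real lam * rot lam u) - h') * rot lam u ^ 2
      + (deriv ^^ 2) F (\<gamma> u) * (2 * \<i> * of_real lam * rot lam u ^ 2)) (at u)"
    by (rule has_vector_derivative_eq_rhs) (simp add: algebra_simps)
  then have "((\<lambda>s. pz (pz f) (\<xi>, s)) has_vector_derivative
      (deriv ^^ 3) F (\<gamma> u) * (\<xi> * (\<i> * of_real lam * rot lam u) - h') * rot lam u ^ 2
      + (deriv ^^ 2) F (\<gamma> u) * (2 * \<i> * of_real lam * rot lam u ^ 2)) (at u)"
    by (rule has_vector_derivative_transform_within_open[OF _ open_slice_u[OF assms(1)]])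
       (use assms(5) pz_funpow_normal_form[OF assms(1-4), of _ _ 0] in \<open>auto simp: \<gamma>_def eval_nat_numeral\<close>)
  then show ?thesis unfolding pu_def \<gamma>_def by (simp add: vector_derivative_at)
qed

lemma pde_of_normal_form:
  assumes "open U" and nz2: "\<And>p. p \<in> U \<Longrightarrow> pz (pz f) p \<noteq> 0"
    and "open V" "(z, u) \<in> V" "V \<subseteq> U" "open W" "F holomorphic_on W"
    and nz3: "\<forall>w\<in>W. (deriv ^^ 3) F w \<noteq> 0" and dh: "(h has_vector_derivative h') (at u)"
    and rep: "\<forall>(z, u)\<in>V. z * rot lam u - h u \<in> W \<and> f (z, u) = F (z * rot lam u - h u) + A1 u * z + A0 u"
  shows "pz (\<lambda>q. psi f q / phi f q) (z, u) = \<i> * of_real lam * (pz (\<lambda>q. 2 / phi f q) (z, u) + 1)"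
proof -
  define Vu where "Vu = {\<xi>. (\<xi>, u) \<in> V}"
  define \<gamma> where "\<gamma> = (\<lambda>\<xi>. \<xi> * rot lam u - h u)"
  define D2 where "D2 = (\<lambda>\<xi>. 2 * (deriv ^^ 2) F (\<gamma> \<xi>) / ((deriv ^^ 3) F (\<gamma> \<xi>) * rot lam u))"
  have "open Vu" "z \<in> Vu" using open_slice_z[OF assms(3)] assms(4) by (auto simp: Vu_def)
  have \<gamma>W: "\<gamma> ` Vu \<subseteq> W" using rep by (auto simp: Vu_def \<gamma>_def)
  have pz2: "pz (pz f) (\<xi>, u) = (deriv ^^ 2) F (\<gamma> \<xi>) * rot lam u ^ 2"
    and pz3: "pz (pz (pz f)) (\<xi>, u) = (deriv ^^ 3) F (\<gamma> \<xi>) * rot lam u ^ 3"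
    and pu2: "pu (pz (pz f)) (\<xi>, u) = (deriv ^^ 3) F (\<gamma> \<xi>) * (\<xi> * (\<i> * of_real lam * rot lam u) - h') * rot lam u ^ 2
      + (deriv ^^ 2) F (\<gamma> \<xi>) * (2 * \<i> * of_real lam * rot lam u ^ 2)"
    and nz: "(deriv ^^ 2) F (\<gamma> \<xi>) \<noteq> 0" "(deriv ^^ 3) F (\<gamma> \<xi>) \<noteq> 0" if "\<xi> \<in> Vu" for \<xi>
  proof -
    note nf = pz_funpow_normal_form[OF assms(3,6,7) rep, of \<xi> u]
    show pz2: "pz (pz f) (\<xi>, u) = (deriv ^^ 2) F (\<gamma> \<xi>) * rot lam u ^ 2"
      and "pz (pz (pz f)) (\<xi>, u) = (deriv ^^ 3) F (\<gamma> \<xi>) * rot lam u ^ 3"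
      using nf[of 0] nf[of 1] that by (simp_all add: Vu_def \<gamma>_def eval_nat_numeral)
    show "pu (pz (pz f)) (\<xi>, u) = (deriv ^^ 3) F (\<gamma> \<xi>) * (\<xi> * (\<i> * of_real lam * rot lam u) - h') * rot lam u ^ 2
      + (deriv ^^ 2) F (\<gamma> \<xi>) * (2 * \<i> * of_real lam * rot lam u ^ 2)"
      using pu_pz_pz_normal_form[OF assms(3,6,7) rep _ dh] that by (simp add: Vu_def \<gamma>_def)
    show "(deriv ^^ 2) F (\<gamma> \<xi>) \<noteq> 0" "(deriv ^^ 3) F (\<gamma> \<xi>) \<noteq> 0"
      using nz2[of "(\<xi>, u)"] pz2 nz3 \<gamma>W that assms(5) by (auto simp: Vu_def)
  qed
  have "D2 holomorphic_on Vu"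
    unfolding D2_def \<gamma>_def using nz \<gamma>W
    by (intro holomorphic_intros holomorphic_on_compose_gen[OF _ holomorphic_higher_deriv[OF assms(7,6)],
          unfolded o_def]) (auto simp: \<gamma>_def)
  then have dD2: "(D2 has_field_derivative deriv D2 z) (at z)"
    using \<open>open Vu\<close> \<open>z \<in> Vu\<close>
    by (simp add: DERIV_deriv_iff_field_differentiable holomorphic_on_imp_differentiable_at)
  have "pz (\<lambda>q. 2 / phi f q) (z, u) = deriv D2 z"
    by (rule pz_eq_deriv[OF \<open>open Vu\<close> \<open>z \<in> Vu\<close>])
       (use nz in \<open>simp add: phi_def D2_def pz2 pz3 field_simps eval_nat_numeral\<close>)
  moreover have "pz (\<lambda>q. psi f q / phi f q) (z, u)
      = deriv (\<lambda>\<xi>. \<i> * of_real lam * \<xi> - h' / rot lam u + \<i> * of_real lam * D2 \<xi>) z"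
    by (rule pz_eq_deriv[OF \<open>open Vu\<close> \<open>z \<in> Vu\<close>])
       (use nz in \<open>simp add: phi_def psi_def D2_def pz2 pz3 pu2 field_simps eval_nat_numeral\<close>)
  moreover have "deriv (\<lambda>\<xi>. \<i> * of_real lam * \<xi> - h' / rot lam u + \<i> * of_real lam * D2 \<xi>) z
      = \<i> * of_real lam + \<i> * of_real lam * deriv D2 z"
    by (rule DERIV_imp_deriv) (auto intro!: derivative_eq_intros dD2)
  ultimately show ?thesis by (simp add: algebra_simps)
qed

section \<open>Solutions of the equation have the normal form\<close>

locale regular_family =
  fixes U :: "(complex \<times> real) set" and f :: "complex \<times> real \<Rightarrow> complex"
  assumes open_U: "open U" and smooth: "smooth_on U f"
    and holomorphic: "\<And>u. (\<lambda>z. f (z, u)) holomorphic_on {z. (z, u) \<in> U}"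
    and pz2_nonzero: "\<And>p. p \<in> U \<Longrightarrow> pz (pz f) p \<noteq> 0"
    and pz3_nonzero: "\<And>p. p \<in> U \<Longrightarrow> pz (pz (pz f)) p \<noteq> 0"
begin

definition fzzu :: "complex \<times> real \<Rightarrow> complex" where
  "fzzu = iter_dd [(0, 1), (1, 0), (1, 0)] f"

lemma iter_dd_eq_pz_funpow: "p \<in> U \<Longrightarrow> iter_dd (replicate k (1, 0)) f p = (pz ^^ k) f p"
  using pz_funpow_eq_iter_dd[OF open_U holomorphic] by blast

lemma pz_funpow_has_field_derivative:
  "(\<xi>, t) \<in> U \<Longrightarrow> ((\<lambda>\<xi>. (pz ^^ k) f (\<xi>, t)) has_field_derivative (pz ^^ Suc k) f (\<xi>, t)) (at \<xi>)"
  using pz_has_field_derivative[OF open_U] pz_funpow_eq_iter_dd[OF open_U holomorphic] by simp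

lemma
  assumes "(\<xi>, t) \<in> U"
  shows pz0_has_field_derivative: "((\<lambda>\<xi>. f (\<xi>, t)) has_field_derivative pz f (\<xi>, t)) (at \<xi>)"
    and pz1_has_field_derivative: "((\<lambda>\<xi>. pz f (\<xi>, t)) has_field_derivative pz (pz f) (\<xi>, t)) (at \<xi>)"
    and pz2_has_field_derivative:
      "((\<lambda>\<xi>. pz (pz f) (\<xi>, t)) has_field_derivative pz (pz (pz f)) (\<xi>, t)) (at \<xi>)"
  using pz_funpow_has_field_derivative[OF assms, of 0] pz_funpow_has_field_derivative[OF assms, of 1]
    pz_funpow_has_field_derivative[OF assms, of 2]
  by (simp_all add: eval_nat_numeral)

lemma pz2_has_vector_derivative_u:
  assumes "(\<xi>, t) \<in> U"
  shows "((\<lambda>s. pz (pz f) (\<xi>, s)) has_vector_derivative fzzu (\<xi>, t)) (at t)"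
proof -
  have "((\<lambda>s. iter_dd [(1, 0), (1, 0)] f (\<xi>, s)) has_vector_derivative fzzu (\<xi>, t)) (at t)"
    unfolding fzzu_def by (rule smooth_on_slice_u_has_vector_derivative[OF smooth assms])
  then show ?thesis
    by (rule has_vector_derivative_transform_within_open[OF _ open_slice_u[OF open_U]])
       (use assms iter_dd_eq_pz_funpow[of _ 2] in \<open>auto simp: eval_nat_numeral\<close>)
qed

lemma pu_pz2_eq: "(\<xi>, t) \<in> U \<Longrightarrow> pu (pz (pz f)) (\<xi>, t) = fzzu (\<xi>, t)"
  unfolding pu_def using pz2_has_vector_derivative_u by (simp add: vector_derivative_at)

lemma continuous_on_fzzu: "continuous_on U fzzu"
  using smooth unfolding smooth_on_def fzzu_def by blast

lemma continuous_on_pz3: "continuous_on U (pz (pz (pz f)))"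
proof -
  have "continuous_on U (iter_dd (replicate 3 (1, 0)) f)"
    using smooth unfolding smooth_on_def by blast
  then show ?thesis
    by (rule continuous_on_eq) (simp only: iter_dd_eq_pz_funpow, simp add: eval_nat_numeral)
qed

lemma fzzu_field_differentiable: "(z, u) \<in> U \<Longrightarrow> (\<lambda>\<xi>. fzzu (\<xi>, u)) field_differentiable (at z)"
  by (rule partial_u_field_differentiable[OF open_U continuous_on_fzzu pz2_has_vector_derivative_u
        pz_holomorphic[OF open_U pz_holomorphic[OF open_U holomorphic]]])

lemma C_infinity_on_slice_pz_funpow:
  "C_infinity_on {t. (z, t) \<in> U} (\<lambda>t. (pz ^^ k) f (z, t))"
  by (rule C_infinity_on_cong[OF smooth_on_slice_u[OF smooth, of z "replicate k (1, 0)"] open_slice_u[OF open_U]])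
     (simp add: iter_dd_eq_pz_funpow)

lemma C_infinity_on_slice_fzzu: "C_infinity_on {t. (z, t) \<in> U} (\<lambda>t. fzzu (z, t))"
  unfolding fzzu_def by (rule smooth_on_slice_u[OF smooth])

lemma
  assumes "(\<xi>, t) \<in> U"
  shows psi_div_phi_has_field_derivative:
      "((\<lambda>\<eta>. psi f (\<eta>, t) / phi f (\<eta>, t)) has_field_derivative pz (\<lambda>q. psi f q / phi f q) (\<xi>, t)) (at \<xi>)"
    and two_div_phi_has_field_derivative:
      "((\<lambda>\<eta>. 2 / phi f (\<eta>, t)) has_field_derivative pz (\<lambda>q. 2 / phi f q) (\<xi>, t)) (at \<xi>)"
proof -
  define S where "S = {\<eta>. (\<eta>, t) \<in> U}"
  have S: "open S" "\<xi> \<in> S" using open_slice_z[OF open_U] assms by (auto simp: S_def)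
  have d: "(\<lambda>\<eta>. pz (pz f) (\<eta>, t)) field_differentiable (at \<xi>)"
    "(\<lambda>\<eta>. pz (pz (pz f)) (\<eta>, t)) field_differentiable (at \<xi>)"
    "(\<lambda>\<eta>. fzzu (\<eta>, t)) field_differentiable (at \<xi>)"
    using pz_funpow_has_field_derivative[OF assms, of 2] pz_funpow_has_field_derivative[OF assms, of 3]
      fzzu_field_differentiable[OF assms]
    by (auto simp: field_differentiable_def eval_nat_numeral)
  have nz: "pz (pz f) (\<xi>, t) \<noteq> 0" "pz (pz (pz f)) (\<xi>, t) \<noteq> 0"
    using assms pz2_nonzero pz3_nonzero by auto
  show "((\<lambda>\<eta>. psi f (\<eta>, t) / phi f (\<eta>, t)) has_field_derivative pz (\<lambda>q. psi f q / phi f q) (\<xi>, t)) (at \<xi>)"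
    by (rule pz_has_field_derivative_cong[OF S, of _ _ "\<lambda>\<eta>. fzzu (\<eta>, t) / pz (pz (pz f)) (\<eta>, t)"])
       (use nz pz2_nonzero in \<open>auto simp: S_def psi_def phi_def pu_pz2_eq
         intro!: field_differentiable_divide d\<close>)
  show "((\<lambda>\<eta>. 2 / phi f (\<eta>, t)) has_field_derivative pz (\<lambda>q. 2 / phi f q) (\<xi>, t)) (at \<xi>)"
    by (rule pz_has_field_derivative_cong[OF S, of _ _ "\<lambda>\<eta>. 2 * pz (pz f) (\<eta>, t) / pz (pz (pz f)) (\<eta>, t)"])
       (use nz in \<open>auto simp: phi_def intro!: field_differentiable_divide field_differentiable_mult d
         field_differentiable_const\<close>)
qed

lemma rotated_pz2_has_field_derivative:
  assumes "((w + a) * rot (- lam) u, u) \<in> U"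
  shows "((\<lambda>w. pz (pz f) ((w + a) * rot (- lam) u, u) * rot (- lam) u ^ 2) has_field_derivative
    pz (pz (pz f)) ((w + a) * rot (- lam) u, u) * rot (- lam) u ^ 3) (at w)"
proof -
  have "((\<lambda>w. pz (pz f) ((w + a) * rot (- lam) u, u)) has_field_derivative
      pz (pz (pz f)) ((w + a) * rot (- lam) u, u) * rot (- lam) u) (at w)"
    by (rule DERIV_chain2[of "\<lambda>\<xi>. pz (pz f) (\<xi>, u)" _ "\<lambda>w. (w + a) * rot (- lam) u",
          OF pz2_has_field_derivative[OF assms]])
       (auto intro!: derivative_eq_intros)
  from DERIV_cmult_right[OF this, of "rot (- lam) u ^ 2"] show ?thesis
    by (simp add: power2_eq_square power3_eq_cube mult.assoc)
qed

lemma normal_form_on_slice: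
  assumes "convex W"
    and F1: "\<And>w. w \<in> W \<Longrightarrow> (F has_field_derivative F1 w) (at w)"
    and G: "\<And>w. w \<in> W \<Longrightarrow> (F1 has_field_derivative G w) (at w)"
    and profile: "\<And>\<xi>. \<xi> * E - b \<in> W \<Longrightarrow> (\<xi>, t) \<in> U \<and> pz (pz f) (\<xi>, t) = G (\<xi> * E - b) * E ^ 2"
    and "z0 * E - b \<in> W" "z * E - b \<in> W"
  shows "f (z, t) = F (z * E - b) + (pz f (z0, t) - F1 (z0 * E - b) * E) * z
    + (f (z0, t) - F (z0 * E - b) - (pz f (z0, t) - F1 (z0 * E - b) * E) * z0)"
proof -
  define S where "S = {\<xi>. \<xi> * E - b \<in> W}"
  define K where "K = (\<lambda>\<xi>. f (\<xi>, t) - F (\<xi> * E - b))"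
  define K1 where "K1 = (\<lambda>\<xi>. pz f (\<xi>, t) - F1 (\<xi> * E - b) * E)"
  have comp: "((\<lambda>\<xi>. H (\<xi> * E - b)) has_field_derivative H' (\<xi> * E - b) * E) (at \<xi>)"
    if "\<xi> \<in> S" "\<And>w. w \<in> W \<Longrightarrow> (H has_field_derivative H' w) (at w)" for \<xi> H H'
    using that by (intro DERIV_chain2[of H]) (auto simp: S_def intro!: derivative_eq_intros)
  have "(K has_field_derivative K1 \<xi>) (at \<xi>)" if "\<xi> \<in> S" for \<xi>
    unfolding K_def K1_def
    by (intro DERIV_diff pz0_has_field_derivative comp[OF that F1]) (use profile that in \<open>auto simp: S_def\<close>)
  moreover have "(K1 has_field_derivative 0) (at \<xi>)" if "\<xi> \<in> S" for \<xi>
  proof -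
    have "(K1 has_field_derivative pz (pz f) (\<xi>, t) - G (\<xi> * E - b) * E * E) (at \<xi>)"
      unfolding K1_def
      by (intro DERIV_diff DERIV_cmult_right pz1_has_field_derivative comp[OF that G])
         (use profile that in \<open>auto simp: S_def\<close>)
    with profile that show ?thesis by (simp add: S_def power2_eq_square mult.assoc)
  qed
  ultimately have "K z = K z0 + K1 z0 * (z - z0)"
    by (rule affine_if_second_derivative_zero[OF convex_affine_vimage[OF assms(1)], folded S_def])
       (use assms(5,6) in \<open>auto simp: S_def\<close>)
  then show ?thesis by (simp add: K_def K1_def algebra_simps)
qed

lemma C_infinity_on_normal_form_coeffs:
  assumes "open J" "J \<subseteq> {t. (z0, t) \<in> U}" "C_infinity_on J h" "open W" "F holomorphic_on W"
    and in_W: "\<And>t. t \<in> J \<Longrightarrow> z0 * rot lam t - h t \<in> W"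
  shows "C_infinity_on J (\<lambda>t. pz f (z0, t) - deriv F (z0 * rot lam t - h t) * rot lam t)"
    and "C_infinity_on J (\<lambda>t. f (z0, t) - F (z0 * rot lam t - h t)
      - (pz f (z0, t) - deriv F (z0 * rot lam t - h t) * rot lam t) * z0)"
proof -
  have \<gamma>: "C_infinity_on J (\<lambda>t. z0 * rot lam t - h t)"
    by (intro C_infinity_on_diff C_infinity_on_mult C_infinity_on_const C_infinity_on_cis assms(3))
  have slice: "C_infinity_on J (\<lambda>t. (pz ^^ k) f (z0, t))" for k
    using C_infinity_on_subset[OF C_infinity_on_slice_pz_funpow assms(2)] .
  show A1: "C_infinity_on J (\<lambda>t. pz f (z0, t) - deriv F (z0 * rot lam t - h t) * rot lam t)"
    using slice[of 1]
    by (intro C_infinity_on_diff C_infinity_on_mult C_infinity_on_cis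
        C_infinity_on_holomorphic_comp[OF \<gamma> assms(4) in_W holomorphic_deriv[OF assms(5,4)]]) simp_all
  show "C_infinity_on J (\<lambda>t. f (z0, t) - F (z0 * rot lam t - h t)
      - (pz f (z0, t) - deriv F (z0 * rot lam t - h t) * rot lam t) * z0)"
    using slice[of 0]
    by (intro C_infinity_on_diff C_infinity_on_mult C_infinity_on_const A1
        C_infinity_on_holomorphic_comp[OF \<gamma> assms(4) in_W assms(5)]) simp_all
qed

lemma normal_form_from_profile:
  assumes "open J" "C_infinity_on J h" "open W" "convex W" "G holomorphic_on W" "\<forall>w\<in>W. deriv G w \<noteq> 0"
    and profile: "\<And>\<xi> t. t \<in> J \<Longrightarrow> \<xi> * rot lam t - h t \<in> W \<Longrightarrow>
      (\<xi>, t) \<in> U \<and> pz (pz f) (\<xi>, t) = G (\<xi> * rot lam t - h t) * rot lam t ^ 2"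
    and z0: "\<And>t. t \<in> J \<Longrightarrow> z0 * rot lam t - h t \<in> W"
  obtains F A1 A0 where "F holomorphic_on W" "\<forall>w\<in>W. (deriv ^^ 3) F w \<noteq> 0"
    "C_infinity_on J A1" "C_infinity_on J A0"
    "\<And>\<xi> t. t \<in> J \<Longrightarrow> \<xi> * rot lam t - h t \<in> W \<Longrightarrow> f (\<xi>, t) = F (\<xi> * rot lam t - h t) + A1 t * \<xi> + A0 t"
proof -
  obtain F F1 where F: "\<And>w. w \<in> W \<Longrightarrow> (F has_field_derivative F1 w) (at w)"
    and F1: "\<And>w. w \<in> W \<Longrightarrow> (F1 has_field_derivative G w) (at w)"
    using holomorphic_second_primitive[OF assms(4,3,5)] by blast
  have hol: "F holomorphic_on W" using F holomorphic_on_open[OF assms(3)] by blast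
  have deriv_F: "deriv F w = F1 w" if "w \<in> W" for w
    using F[OF that] by (rule DERIV_imp_deriv)
  have deriv2_F: "deriv (deriv F) w = G w" if "w \<in> W" for w
  proof -
    have "deriv (deriv F) w = deriv F1 w"
      by (rule deriv_cong_ev[OF eventually_mono[OF eventually_nhds_in_open[OF assms(3) that]]])
         (auto simp: deriv_F)
    with F1[OF that] show ?thesis by (simp add: DERIV_imp_deriv)
  qed
  have "(deriv ^^ 3) F w = deriv G w" if "w \<in> W" for w
  proof -
    have "deriv (deriv (deriv F)) w = deriv G w"
      by (rule deriv_cong_ev[OF eventually_mono[OF eventually_nhds_in_open[OF assms(3) that]]])
         (auto simp: deriv2_F)
    then show ?thesis by (simp add: eval_nat_numeral)
  qed
  with assms(6) have nz: "\<forall>w\<in>W. (deriv ^^ 3) F w \<noteq> 0" by simp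
  define A1 where "A1 = (\<lambda>t. pz f (z0, t) - deriv F (z0 * rot lam t - h t) * rot lam t)"
  define A0 where "A0 = (\<lambda>t. f (z0, t) - F (z0 * rot lam t - h t) - A1 t * z0)"
  have J_slice: "J \<subseteq> {t. (z0, t) \<in> U}" using profile z0 by blast
  have coeffs: "C_infinity_on J A1" "C_infinity_on J A0"
    using C_infinity_on_normal_form_coeffs[OF assms(1) J_slice assms(2,3) hol z0]
    unfolding A1_def A0_def by blast+
  have rep: "f (\<xi>, t) = F (\<xi> * rot lam t - h t) + A1 t * \<xi> + A0 t"
    if "t \<in> J" "\<xi> * rot lam t - h t \<in> W" for \<xi> t
    using normal_form_on_slice[OF assms(4) F F1 profile[OF that(1)] z0[OF that(1)] that(2)]
      deriv_F[OF z0[OF that(1)]]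
    by (simp add: A1_def A0_def algebra_simps)
  from that[OF hol nz coeffs rep] show ?thesis .
qed

end

locale pde_solution = regular_family +
  fixes lam :: real
  assumes pde: "\<forall>p\<in>U. pz (\<lambda>q. psi f q / phi f q) p = \<i> * complex_of_real lam * (pz (\<lambda>q. 2 / phi f q) p + 1)"
begin

text \<open>The equation says precisely that this coefficient does not depend on \<xi>.\<close>

definition transport_coeff :: "complex \<Rightarrow> real \<Rightarrow> complex" where
  "transport_coeff \<xi> t = (psi f (\<xi>, t) - 2 * \<i> * of_real lam) / phi f (\<xi>, t) - \<i> * of_real lam * \<xi>"

lemma transport_coeff_has_zero_derivative:
  assumes "(\<xi>, t) \<in> U"
  shows "((\<lambda>\<eta>. transport_coeff \<eta> t) has_field_derivative 0) (at \<xi>)"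
proof -
  have eq: "(\<lambda>\<eta>. transport_coeff \<eta> t) = (\<lambda>\<eta>. psi f (\<eta>, t) / phi f (\<eta>, t)
      - \<i> * of_real lam * (2 / phi f (\<eta>, t)) - \<i> * of_real lam * \<eta>)"
    by (simp add: fun_eq_iff transport_coeff_def diff_divide_distrib)
  have "((\<lambda>\<eta>. psi f (\<eta>, t) / phi f (\<eta>, t) - \<i> * of_real lam * (2 / phi f (\<eta>, t))
      - \<i> * of_real lam * \<eta>) has_field_derivative
      pz (\<lambda>q. psi f q / phi f q) (\<xi>, t) - \<i> * of_real lam * pz (\<lambda>q. 2 / phi f q) (\<xi>, t)
      - \<i> * of_real lam * 1) (at \<xi>)"
    by (intro DERIV_diff DERIV_cmult DERIV_ident psi_div_phi_has_field_derivative
        two_div_phi_has_field_derivative assms)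
  moreover have "pz (\<lambda>q. psi f q / phi f q) (\<xi>, t) = \<i> * of_real lam * (pz (\<lambda>q. 2 / phi f q) (\<xi>, t) + 1)"
    using pde assms by blast
  ultimately show ?thesis unfolding eq by (simp add: algebra_simps)
qed

lemma transport_coeff_eq:
  assumes "convex S" "S \<subseteq> {\<xi>. (\<xi>, t) \<in> U}" "\<xi> \<in> S" "\<eta> \<in> S"
  shows "transport_coeff \<xi> t = transport_coeff \<eta> t"
proof -
  have "((\<lambda>\<eta>. transport_coeff \<eta> t) has_field_derivative 0) (at \<zeta> within S)" if "\<zeta> \<in> S" for \<zeta>
  proof (rule has_field_derivative_at_within, rule transport_coeff_has_zero_derivative)
    show "(\<zeta>, t) \<in> U" using assms(2) that by auto
  qed
  from has_field_derivative_zero_constant[OF assms(1) this] assms(3,4) show ?thesis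
    by (metis (no_types, lifting))
qed

lemma fzzu_transport_equation:
  assumes "(\<xi>, t) \<in> U"
  shows "fzzu (\<xi>, t) = 2 * \<i> * of_real lam * pz (pz f) (\<xi>, t)
    + (transport_coeff \<xi> t + \<i> * of_real lam * \<xi>) * pz (pz (pz f)) (\<xi>, t)"
  using pz2_nonzero[OF assms] pz3_nonzero[OF assms]
  by (simp add: transport_coeff_def psi_def phi_def pu_pz2_eq[OF assms] field_simps)

lemma C_infinity_on_transport_coeff: "C_infinity_on {t. (z, t) \<in> U} (transport_coeff z)"
proof (rule C_infinity_on_cong[OF _ open_slice_u[OF open_U]])
  show "C_infinity_on {t. (z, t) \<in> U} (\<lambda>t. (fzzu (z, t) / (pz ^^ 2) f (z, t) - 2 * \<i> * of_real lam)
      / ((pz ^^ 3) f (z, t) / (pz ^^ 2) f (z, t)) - \<i> * of_real lam * z)"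
    using pz2_nonzero pz3_nonzero
    by (intro C_infinity_on_diff C_infinity_on_divide C_infinity_on_const C_infinity_on_slice_fzzu
        C_infinity_on_slice_pz_funpow) (auto simp: eval_nat_numeral)
qed (simp add: transport_coeff_def psi_def phi_def pu_pz2_eq eval_nat_numeral)

lemma pz2_constant_along_characteristic:
  assumes "convex J" and in_U: "\<And>s. s \<in> J \<Longrightarrow> (\<zeta> s, s) \<in> U"
    and d\<zeta>: "\<And>s. s \<in> J \<Longrightarrow> (\<zeta> has_vector_derivative - \<i> * of_real lam * \<zeta> s - transport_coeff (\<zeta> s) s) (at s)"
    and "s \<in> J" "t \<in> J"
  shows "pz (pz f) (\<zeta> s, s) * rot (- lam) s ^ 2 = pz (pz f) (\<zeta> t, t) * rot (- lam) t ^ 2"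
proof -
  have "((\<lambda>s. pz (pz f) (\<zeta> s, s) * rot (- lam) s ^ 2) has_vector_derivative 0) (at s within J)"
    if s: "s \<in> J" for s
  proof -
    have g: "((\<lambda>s. pz (pz f) (\<zeta> s, s)) has_vector_derivative
        pz (pz (pz f)) (\<zeta> s, s) * (- \<i> * of_real lam * \<zeta> s - transport_coeff (\<zeta> s) s) + fzzu (\<zeta> s, s)) (at s)"
      using has_vector_derivative_along_curve[OF open_U pz2_has_field_derivative continuous_on_pz3
            pz2_has_vector_derivative_u[OF in_U[OF s]] d\<zeta>[OF s] in_U[OF s]] by simp
    also have "pz (pz (pz f)) (\<zeta> s, s) * (- \<i> * of_real lam * \<zeta> s - transport_coeff (\<zeta> s) s) + fzzu (\<zeta> s, s)
        = 2 * \<i> * of_real lam * pz (pz f) (\<zeta> s, s)"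
      unfolding fzzu_transport_equation[OF in_U[OF s]] by (simp add: algebra_simps)
    finally have g': "((\<lambda>s. pz (pz f) (\<zeta> s, s)) has_vector_derivative 2 * \<i> * of_real lam * pz (pz f) (\<zeta> s, s)) (at s)" .
    have r: "((\<lambda>s. rot (- lam) s ^ 2) has_vector_derivative - 2 * \<i> * of_real lam * rot (- lam) s ^ 2) (at s)"
      using has_vector_derivative_mult[OF rot_has_vector_derivative[of "- lam" s] rot_has_vector_derivative[of "- lam" s]]
      unfolding power2_eq_square by (simp add: algebra_simps)
    have "((\<lambda>s. pz (pz f) (\<zeta> s, s) * rot (- lam) s ^ 2) has_vector_derivative 0) (at s)"
      using has_vector_derivative_mult[OF g' r] by (simp add: algebra_simps)
    then show ?thesis by (rule has_vector_derivative_at_within)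
  qed
  from has_vector_derivative_zero_constant[OF assms(1) this] assms(4,5) show ?thesis
    by (metis (no_types, lifting))
qed

lemma characteristic_chart:
  assumes "(z0, u0) \<in> U"
  obtains J h W where "open J" "u0 \<in> J" "C_infinity_on J h" "open W" "convex W"
    "\<And>t. t \<in> J \<Longrightarrow> z0 * rot lam t - h t \<in> W"
    "\<And>w t. w \<in> W \<Longrightarrow> t \<in> J \<Longrightarrow> ((w + h t) * rot (- lam) t, t) \<in> U \<and>
       pz (pz f) ((w + h t) * rot (- lam) t, t) * rot (- lam) t ^ 2
       = pz (pz f) ((w + h u0) * rot (- lam) u0, u0) * rot (- lam) u0 ^ 2"
proof -
  obtain \<rho> where \<rho>: "\<rho> > 0" "cball z0 \<rho> \<times> cball u0 \<rho> \<subseteq> U"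
    using cball_times_cball_in_open[OF open_U assms] by blast
  have "cball u0 \<rho> \<subseteq> {t. (z0, t) \<in> U}" using \<rho> by auto
  moreover have "C_infinity_on {t. (z0, t) \<in> U} (\<lambda>t. - transport_coeff z0 t * rot lam t)"
    by (intro C_infinity_on_mult C_infinity_on_minus C_infinity_on_transport_coeff C_infinity_on_cis)
  ultimately obtain h where h: "C_infinity_on (ball u0 \<rho>) h"
    and dh: "\<And>t. t \<in> ball u0 \<rho> \<Longrightarrow> (h has_vector_derivative - transport_coeff z0 t * rot lam t) (at t)"
    using C_infinity_primitive_ball[OF open_slice_u[OF open_U]] by blast
  obtain \<delta> where \<delta>: "0 < \<delta>" "\<delta> \<le> \<rho>"
      "\<And>t. t \<in> ball u0 \<delta> \<Longrightarrow> z0 * rot lam t - h t \<in> ball (z0 * rot lam u0 - h u0) (\<rho>/2)"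
      "\<And>w t. w \<in> ball (z0 * rot lam u0 - h u0) (\<rho>/2) \<Longrightarrow> t \<in> ball u0 \<delta> \<Longrightarrow> (w + h t) * rot (- lam) t \<in> ball z0 \<rho>"
    using characteristic_box[OF \<rho>(1) C_infinity_on_imp_continuous_on[OF h open_ball]] by blast
  define J where "J = ball u0 \<delta>"
  define W where "W = ball (z0 * rot lam u0 - h u0) (\<rho>/2)"
  have JU: "J \<subseteq> ball u0 \<rho>" using \<delta>(2) by (auto simp: J_def)
  have box: "(x, t) \<in> U" if "x \<in> ball z0 \<rho>" "t \<in> J" for x t
  proof -
    have "x \<in> cball z0 \<rho>" "t \<in> cball u0 \<rho>" using that JU by auto
    with \<rho>(2) show ?thesis by blast
  qed
  have in_U: "((w + h t) * rot (- lam) t, t) \<in> U" if "w \<in> W" "t \<in> J" for w t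
    by (rule box[OF \<delta>(4)[OF that(1)[unfolded W_def] that(2)[unfolded J_def]] that(2)])
  have "pz (pz f) ((w + h t) * rot (- lam) t, t) * rot (- lam) t ^ 2
      = pz (pz f) ((w + h u0) * rot (- lam) u0, u0) * rot (- lam) u0 ^ 2" if "w \<in> W" "t \<in> J" for w t
  proof (rule pz2_constant_along_characteristic[where J = J])
    fix s assume s: "s \<in> J"
    show "((w + h s) * rot (- lam) s, s) \<in> U" by (rule in_U[OF that(1) s])
    have "transport_coeff z0 s = transport_coeff ((w + h s) * rot (- lam) s) s"
    proof (rule transport_coeff_eq[where S = "ball z0 \<rho>"])
      show "ball z0 \<rho> \<subseteq> {\<xi>. (\<xi>, s) \<in> U}" using box s by blast
      show "(w + h s) * rot (- lam) s \<in> ball z0 \<rho>"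
        by (rule \<delta>(4)[OF that(1)[unfolded W_def] s[unfolded J_def]])
    qed (use \<rho>(1) in auto)
    moreover have "s \<in> ball u0 \<rho>" using JU s by blast
    ultimately show "((\<lambda>s. (w + h s) * rot (- lam) s) has_vector_derivative - \<i> * of_real lam * ((w + h s) * rot (- lam) s)
        - transport_coeff ((w + h s) * rot (- lam) s) s) (at s)"
      using characteristic_curve_has_vector_derivative[OF dh] by metis
  qed (use that \<delta>(1) in \<open>auto simp: J_def\<close>)
  moreover have "C_infinity_on J h" using C_infinity_on_subset[OF h JU] .
  moreover have "open J" "u0 \<in> J" "open W" "convex W" using \<delta>(1) by (simp_all add: J_def W_def)
  moreover have "z0 * rot lam t - h t \<in> W" if "t \<in> J" for t
    using \<delta>(3) that by (simp add: J_def W_def)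
  ultimately show ?thesis using that[of J h W] in_U by blast
qed

lemma local_normal_form:
  assumes "(z0, u0) \<in> U"
  shows "\<exists>V W F h A1 A0.
        open V \<and> (z0, u0) \<in> V \<and> V \<subseteq> U \<and>
        open W \<and> F holomorphic_on W \<and>
        (\<forall>w\<in>W. (deriv ^^ 3) F w \<noteq> 0) \<and>
        smooth_on (snd ` V) (h :: real \<Rightarrow> complex) \<and>
        smooth_on (snd ` V) (A1 :: real \<Rightarrow> complex) \<and>
        smooth_on (snd ` V) (A0 :: real \<Rightarrow> complex) \<and>
        (\<forall>(z, u)\<in>V. z * rot lam u - h u \<in> W \<and> f (z, u) = F (z * rot lam u - h u) + A1 u * z + A0 u)"
proof -
  obtain J h W where J: "open J" "u0 \<in> J" and h: "C_infinity_on J h" and W: "open W" "convex W"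
    and z0: "\<And>t. t \<in> J \<Longrightarrow> z0 * rot lam t - h t \<in> W"
    and chart: "\<And>w t. w \<in> W \<Longrightarrow> t \<in> J \<Longrightarrow> ((w + h t) * rot (- lam) t, t) \<in> U \<and>
       pz (pz f) ((w + h t) * rot (- lam) t, t) * rot (- lam) t ^ 2
       = pz (pz f) ((w + h u0) * rot (- lam) u0, u0) * rot (- lam) u0 ^ 2"
    using characteristic_chart[OF assms] by blast
  define G where "G = (\<lambda>w. pz (pz f) ((w + h u0) * rot (- lam) u0, u0) * rot (- lam) u0 ^ 2)"
  have dG: "(G has_field_derivative pz (pz (pz f)) ((w + h u0) * rot (- lam) u0, u0) * rot (- lam) u0 ^ 3) (at w)"
    if "w \<in> W" for w
    unfolding G_def by (rule rotated_pz2_has_field_derivative[OF conjunct1[OF chart[OF that J(2)]]])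
  then have G: "G holomorphic_on W" by (auto simp: holomorphic_on_open[OF W(1)])
  have G': "\<forall>w\<in>W. deriv G w \<noteq> 0"
    using DERIV_imp_deriv[OF dG] pz3_nonzero[OF conjunct1[OF chart[OF _ J(2)]]] by simp
  have profile: "(\<xi>, t) \<in> U \<and> pz (pz f) (\<xi>, t) = G (\<xi> * rot lam t - h t) * rot lam t ^ 2"
    if "t \<in> J" "\<xi> * rot lam t - h t \<in> W" for \<xi> t
  proof -
    have "(\<xi>, t) \<in> U" and e: "pz (pz f) (\<xi>, t) * rot (- lam) t ^ 2 = G (\<xi> * rot lam t - h t)"
      using chart[OF that(2,1)] unfolding rot_inverse_shift G_def by auto
    have "pz (pz f) (\<xi>, t) = pz (pz f) (\<xi>, t) * (rot lam t * rot (- lam) t) ^ 2"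
      by (simp only: rot_mult_rot_uminus) simp
    also have "\<dots> = (pz (pz f) (\<xi>, t) * rot (- lam) t ^ 2) * rot lam t ^ 2"
      by (simp only: power_mult_distrib mult_ac)
    finally show ?thesis using \<open>(\<xi>, t) \<in> U\<close> by (simp only: e)
  qed
  obtain F A1 A0 where F: "F holomorphic_on W" "\<forall>w\<in>W. (deriv ^^ 3) F w \<noteq> 0"
      "C_infinity_on J A1" "C_infinity_on J A0"
      "\<And>\<xi> t. t \<in> J \<Longrightarrow> \<xi> * rot lam t - h t \<in> W \<Longrightarrow> f (\<xi>, t) = F (\<xi> * rot lam t - h t) + A1 t * \<xi> + A0 t"
    using normal_form_from_profile[OF J(1) h W G G' profile z0] by blast
  define V where "V = {(z, t). t \<in> J \<and> z * rot lam t - h t \<in> W}"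
  have "open V"
    unfolding V_def by (rule open_characteristic_domain[OF J(1) W(1) C_infinity_on_imp_continuous_on[OF h J(1)]])
  moreover have "(z0, u0) \<in> V" using z0 J(2) by (simp add: V_def)
  moreover have "V \<subseteq> U" using profile by (auto simp: V_def)
  moreover have "snd ` V = J"
    unfolding V_def by (rule snd_image_characteristic_domain[OF z0])
  moreover have "\<forall>(z, u)\<in>V. z * rot lam u - h u \<in> W \<and> f (z, u) = F (z * rot lam u - h u) + A1 u * z + A0 u"
    using F(5) by (auto simp: V_def)
  ultimately show ?thesis
    using W(1) F(1,2) C_infinity_on_imp_smooth_on[OF h J(1)]
      C_infinity_on_imp_smooth_on[OF F(3) J(1)] C_infinity_on_imp_smooth_on[OF F(4) J(1)]
    by (intro exI[of _ V] exI[of _ W] exI[of _ F] exI[of _ h] exI[of _ A1] exI[of _ A0]) simp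
qed

end

lemma (in regular_family) normal_form_if_pde:
  assumes "\<forall>p\<in>U. pz (\<lambda>q. psi f q / phi f q) p = \<i> * complex_of_real lam * (pz (\<lambda>q. 2 / phi f q) p + 1)"
  shows "\<forall>p\<in>U. \<exists>V W F h A1 A0.
        open V \<and> p \<in> V \<and> V \<subseteq> U \<and>
        open W \<and> F holomorphic_on W \<and>
        (\<forall>w\<in>W. (deriv ^^ 3) F w \<noteq> 0) \<and>
        smooth_on (snd ` V) (h :: real \<Rightarrow> complex) \<and>
        smooth_on (snd ` V) (A1 :: real \<Rightarrow> complex) \<and>
        smooth_on (snd ` V) (A0 :: real \<Rightarrow> complex) \<and>
        (\<forall>(z, u)\<in>V. z * rot lam u - h u \<in> W \<and> f (z, u) = F (z * rot lam u - h u) + A1 u * z + A0 u)"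
proof -
  interpret pde_solution U f lam using assms by unfold_locales
  show ?thesis
  proof (rule ballI, goal_cases)
    case (1 p)
    with local_normal_form[of "fst p" "snd p"] show ?case by simp
  qed
qed

lemma pde_if_normal_form:
  assumes "open U" "\<And>p. p \<in> U \<Longrightarrow> pz (pz f) p \<noteq> 0"
    and "\<forall>p\<in>U. \<exists>V W F h A1 A0.
        open V \<and> p \<in> V \<and> V \<subseteq> U \<and>
        open W \<and> F holomorphic_on W \<and>
        (\<forall>w\<in>W. (deriv ^^ 3) F w \<noteq> 0) \<and>
        smooth_on (snd ` V) (h :: real \<Rightarrow> complex) \<and>
        smooth_on (snd ` V) (A1 :: real \<Rightarrow> complex) \<and>
        smooth_on (snd ` V) (A0 :: real \<Rightarrow> complex) \<and>
        (\<forall>(z, u)\<in>V. z * rot lam u - h u \<in> W \<and> f (z, u) = F (z * rot lam u - h u) + A1 u * z + A0 u)"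
  shows "\<forall>p\<in>U. pz (\<lambda>q. psi f q / phi f q) p = \<i> * complex_of_real lam * (pz (\<lambda>q. 2 / phi f q) p + 1)"
proof
  fix p assume "p \<in> U"
  obtain z u where p: "p = (z, u)" by fastforce
  from bspec[OF assms(3) \<open>p \<in> U\<close>] obtain V W F h A1 A0 where
    V: "open V" "(z, u) \<in> V" "V \<subseteq> U" and W: "open W" "F holomorphic_on W" "\<forall>w\<in>W. (deriv ^^ 3) F w \<noteq> 0"
    and h: "smooth_on (snd ` V) h"
    and rep: "\<forall>(z, u)\<in>V. z * rot lam u - h u \<in> W \<and> f (z, u) = F (z * rot lam u - h u) + A1 u * z + A0 u"
    unfolding p by (elim exE conjE) (rule that)
  have "u \<in> snd ` V" using V(2) by force
  from pde_of_normal_form[OF assms(1,2) V W smooth_on_has_vector_derivative[OF h this] rep]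
  show "pz (\<lambda>q. psi f q / phi f q) p = \<i> * complex_of_real lam * (pz (\<lambda>q. 2 / phi f q) p + 1)"
    unfolding p .
qed

text \<open>Both directions are local.\<close>

theorem mainTheorem6:
  fixes lam :: real
    and U :: "(complex \<times> real) set"
    and f :: "complex \<times> real \<Rightarrow> complex"
  assumes "open U" and "connected U"
    and "smooth_on U f"
    and "\<And>u. (\<lambda>z. f (z, u)) holomorphic_on {z. (z, u) \<in> U}"
    and "\<And>p. p \<in> U \<Longrightarrow> pz (pz f) p \<noteq> 0"
    and "\<And>p. p \<in> U \<Longrightarrow> pz (pz (pz f)) p \<noteq> 0"
  shows "(\<forall>p\<in>U. pz (\<lambda>q. psi f q / phi f q) p
                 = \<i> * complex_of_real lam * (pz (\<lambda>q. 2 / phi f q) p + 1))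
    \<longleftrightarrow>
    (\<forall>p\<in>U. \<exists>V W F h A1 A0.
        open V \<and> p \<in> V \<and> V \<subseteq> U \<and>
        open W \<and> F holomorphic_on W \<and>
        (\<forall>w\<in>W. (deriv ^^ 3) F w \<noteq> 0) \<and>
        smooth_on (snd ` V) (h :: real \<Rightarrow> complex) \<and>
        smooth_on (snd ` V) (A1 :: real \<Rightarrow> complex) \<and>
        smooth_on (snd ` V) (A0 :: real \<Rightarrow> complex) \<and>
        (\<forall>(z, u)\<in>V. z * exp (\<i> * complex_of_real (lam * u)) - h u \<in> W \<and>
           f (z, u) = F (z * exp (\<i> * complex_of_real (lam * u)) - h u) + A1 u * z + A0 u))"
proof -
  interpret regular_family U f
    using assms(1,3-6) by unfold_locales
  show ?thesis
    using normal_form_if_pde[of lam] pde_if_normal_form[OF assms(1,5), of lam] by (rule iffI)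
qed

end
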